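(* If $2\le n\le5$, then $\Gamma=\mathrm{Q}$. If $n=6$, then $\Gamma\ne\mathrm{Q}$.
   Context: Let $\mathrm{C}$ be either the real Clifford algebra $C\ell_{p,q}$ with $p+q=n$, or the complex Clifford algebra $C\ell(\mathbb{C}^n)$. It has identity $e$ and generators $e_1,\dots,e_n$ satisfying $e_ae_b+e_be_a=2\eta_{ab}e$. In the real case $\eta=\mathrm{diag}(1,\dots,1,-1,\dots,-1)$ with $p$ entries $+1$ and $q$ entries $-1$. In the complex case $\eta=I_n$. $\mathrm{C}^k$ is the grade-$k$ subspace, spanned by the products $e_{a_1}\cdots e_{a_k}$ with $a_1<\dots<a_k$. The even subspace is $\mathrm{C}^{(0)}=\bigoplus_{k\text{ even}}\mathrm{C}^k$ and the odd subspace is $\mathrm{C}^{(1)}=\bigoplus_{k\text{ odd}}\mathrm{C}^k$. The reversion $U\mapsto\tilde U$ is the linear anti-automorphism acting on $\mathrm{C}^k$ as $(-1)^{k(k-1)/2}$. For $S\subseteq\mathrm{C}$, $S^\times$ is the set of elements of $S$ invertible in $\mathrm{C}$, and $\mathrm{C}^{\times(j)}:=(\mathrm{C}^{(j)})^\times$. $\mathrm{Z}$ is the center: $\mathrm{Z}=\mathrm{C}^0$ for $n$ even and $\mathrm{Z}=\mathrm{C}^0\oplus\mathrm{C}^n$ for $n$ odd. Define: <ul> <li>the Clifford group $\Gamma=\{T\in\mathrm{C}^\times: T\,\mathrm{C}^1\,T^{-1}\subseteq\mathrm{C}^1\}$;</li> <li>$\mathrm{P}:=\mathrm{Z}^\times(\mathrm{C}^{\times(0)}\cup\mathrm{C}^{\times(1)})=\{WT: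 W\in\mathrm{Z}^\times, T\in\mathrm{C}^{\times(0)}\cup\mathrm{C}^{\times(1)}\}$;</li> <li>$\mathrm{Q}:=\{T\in\mathrm{P}:\tilde TT\in\mathrm{Z}^\times\}$.</li> </ul> *)

theory Defs
  imports Main "HOL-Complex_Analysis.Complex_Analysis"
begin

text \<open>Clifford algebra with generators e_0,...,e_(n-1) over a field 'a, with
  e_a e_b + e_b e_a = 2 eta(a) delta_ab e.  An element is represented by its coefficient
  function on basis blades e_A (A a subset of {0..<n}, product in increasing order).\<close>

type_synonym 'a mvec = "nat set \<Rightarrow> 'a"

definition cl_space :: "nat \<Rightarrow> ('a::field) mvec set" where
  "cl_space n = {x. \<forall>A. x A \<noteq> 0 \<longrightarrow> A \<subseteq> {..<n}}"

text \<open>Coefficient in e_A e_B = blade_coeff eta A B * e_(A symmetric-difference B).\<close>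
definition blade_coeff :: "(nat \<Rightarrow> 'a::field) \<Rightarrow> nat set \<Rightarrow> nat set \<Rightarrow> 'a" where
  "blade_coeff eta A B =
     (-1) ^ card {(a, b). a \<in> A \<and> b \<in> B \<and> b < a} * (\<Prod>a\<in>A \<inter> B. eta a)"

definition cl_mult :: "(nat \<Rightarrow> 'a::field) \<Rightarrow> nat \<Rightarrow> 'a mvec \<Rightarrow> 'a mvec \<Rightarrow> 'a mvec" where
  "cl_mult eta n x y = (\<lambda>C. \<Sum>A\<in>Pow {..<n}. \<Sum>B\<in>Pow {..<n}.
      if (A - B) \<union> (B - A) = C then x A * y B * blade_coeff eta A B else 0)"

definition cl_one :: "('a::field) mvec" where
  "cl_one = (\<lambda>A. if A = {} then 1 else 0)"

definition cl_invertible :: "(nat \<Rightarrow> 'a::field) \<Rightarrow> nat \<Rightarrow> 'a mvec \<Rightarrow> bool" where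
  "cl_invertible eta n x \<longleftrightarrow> x \<in> cl_space n \<and>
     (\<exists>y\<in>cl_space n. cl_mult eta n x y = cl_one \<and> cl_mult eta n y x = cl_one)"

definition cl_inv :: "(nat \<Rightarrow> 'a::field) \<Rightarrow> nat \<Rightarrow> 'a mvec \<Rightarrow> 'a mvec" where
  "cl_inv eta n x = (SOME y. y \<in> cl_space n \<and> cl_mult eta n x y = cl_one \<and> cl_mult eta n y x = cl_one)"

definition cl_units :: "(nat \<Rightarrow> 'a::field) \<Rightarrow> nat \<Rightarrow> 'a mvec set \<Rightarrow> 'a mvec set" where
  "cl_units eta n S = {x \<in> S. cl_invertible eta n x}"

definition cl_grade :: "nat \<Rightarrow> nat \<Rightarrow> ('a::field) mvec set" where
  "cl_grade n k = {x \<in> cl_space n. \<forall>A. x A \<noteq> 0 \<longrightarrow> card A = k}"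

definition cl_even :: "nat \<Rightarrow> ('a::field) mvec set" where
  "cl_even n = {x \<in> cl_space n. \<forall>A. x A \<noteq> 0 \<longrightarrow> even (card A)}"

definition cl_odd :: "nat \<Rightarrow> ('a::field) mvec set" where
  "cl_odd n = {x \<in> cl_space n. \<forall>A. x A \<noteq> 0 \<longrightarrow> odd (card A)}"

definition cl_rev :: "('a::field) mvec \<Rightarrow> 'a mvec" where
  "cl_rev x = (\<lambda>A. (-1) ^ (card A * (card A - 1) div 2) * x A)"

definition cl_center :: "nat \<Rightarrow> ('a::field) mvec set" where
  "cl_center n = (if even n then cl_grade n 0
     else {x \<in> cl_space n. \<forall>A. x A \<noteq> 0 \<longrightarrow> card A = 0 \<or> card A = n})"

definition clifford_group :: "(nat \<Rightarrow> 'a::field) \<Rightarrow> nat \<Rightarrow> 'a mvec set" where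
  "clifford_group eta n = {T \<in> cl_units eta n (cl_space n).
     \<forall>V\<in>cl_grade n 1. cl_mult eta n (cl_mult eta n T V) (cl_inv eta n T) \<in> cl_grade n 1}"

definition cl_P :: "(nat \<Rightarrow> 'a::field) \<Rightarrow> nat \<Rightarrow> 'a mvec set" where
  "cl_P eta n = {cl_mult eta n W T | W T. W \<in> cl_units eta n (cl_center n) \<and>
      T \<in> cl_units eta n (cl_even n) \<union> cl_units eta n (cl_odd n)}"

definition cl_Q :: "(nat \<Rightarrow> 'a::field) \<Rightarrow> nat \<Rightarrow> 'a mvec set" where
  "cl_Q eta n = {T \<in> cl_P eta n. cl_mult eta n (cl_rev T) T \<in> cl_units eta n (cl_center n)}"

definition real_sig :: "nat \<Rightarrow> nat \<Rightarrow> real" where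
  "real_sig p a = (if a < p then 1 else -1)"

definition complex_sig :: "nat \<Rightarrow> complex" where
  "complex_sig a = 1"

end

theory Submission
  imports Defs "HOL-Library.Function_Algebras"
begin

text \<open>
  \<open>\<Gamma> \<subseteq> Q\<close> holds in every dimension. For \<open>T \<in> \<Gamma>\<close> with even part \<open>T\<^sub>0\<close>, the odd parts of
  \<open>T v = (T v T\<^sup>-\<^sup>1) T\<close> give \<open>T\<^sub>0 v = (T v T\<^sup>-\<^sup>1) T\<^sub>0\<close>, so \<open>T\<^sup>-\<^sup>1 T\<^sub>0\<close> commutes with every
  vector and is central. If it is a scalar, \<open>T\<close> is homogeneous; otherwise \<open>n\<close> is odd and
  \<open>T = W T\<^sub>0\<close> with \<open>W = 1 + c I\<close> central and invertible, \<open>I\<close> the unit pseudoscalar. In the same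
  way \<open>rev(T) T\<close> commutes with every vector.

  Conversely, let \<open>T = W T'\<close> lie in \<open>Q\<close> with \<open>W\<close> central and \<open>T'\<close> homogeneous. Then
  \<open>rev(T') T'\<close> is central and even, hence a nonzero scalar, so \<open>T'\<^sup>-\<^sup>1\<close> is a multiple of
  \<open>rev(T')\<close> and \<open>Y = T' v T'\<^sup>-\<^sup>1\<close> is odd, fixed by reversion, and squares to a scalar.
  Reversion is \<open>-1\<close> on grade 3, so for \<open>n \<le> 5\<close> only grades 1 and 5 remain; a grade-5 part
  would leave a grade-4 term in \<open>Y\<^sup>2\<close> unless \<open>Y\<close> is a multiple of \<open>I\<close>, which conjugating
  back to \<open>v\<close> excludes.

  For \<open>n = 6\<close>, \<open>T = 2 + I\<close> is even and \<open>rev(T) T = 4 - I\<^sup>2\<close> is a nonzero scalar, since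
  reversion is \<open>-1\<close> on grade 6. But \<open>I\<close> anticommutes with vectors, so \<open>T e\<^sub>0 T\<^sup>-\<^sup>1\<close> has a
  nonzero component of grade 5.
\<close>

text \<open>A constant rather than the abbreviation \<open>sym_diff\<close>, so that the simplifier keeps it intact.\<close>

definition symdiff :: "'a set \<Rightarrow> 'a set \<Rightarrow> 'a set"  (infixl \<open>\<triangle>\<close> 65)
  where "A \<triangle> B = sym_diff A B"

lemma symdiff_cancel [simp]:
  "A \<triangle> (A \<triangle> C) = C" "(A \<triangle> C) \<triangle> A = C" "C \<triangle> (A \<triangle> C) = A" "(C \<triangle> A) \<triangle> C = A"
  by (auto simp: symdiff_def)

lemma symdiff_empty [simp]: "{} \<triangle> A = A" "A \<triangle> {} = A" "A \<triangle> A = {}"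
  by (auto simp: symdiff_def)

lemma symdiff_eq_iff: "A \<triangle> B = C \<longleftrightarrow> B = A \<triangle> C"
  by (auto simp: symdiff_def)

lemma symdiff_commute: "A \<triangle> B = B \<triangle> A"
  by (auto simp: symdiff_def)

lemma symdiff_subset: "A \<subseteq> U \<Longrightarrow> B \<subseteq> U \<Longrightarrow> A \<triangle> B \<subseteq> U"
  by (auto simp: symdiff_def)

lemma finite_subset_lessThan: "A \<subseteq> {..<(n::nat)} \<Longrightarrow> finite A"
  by (rule finite_subset) auto

lemma finite_symdiff [simp]: "finite A \<Longrightarrow> finite B \<Longrightarrow> finite (A \<triangle> B)"
  by (auto simp: symdiff_def)

lemma card_symdiff:
  assumes "finite A" "finite B"
  shows "card (A \<triangle> B) + 2 * card (A \<inter> B) = card A + card B"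
proof -
  have "card (A \<triangle> B) = card (A - B) + card (B - A)"
    unfolding symdiff_def using assms by (intro card_Un_disjoint) auto
  moreover have "card A = card (A - B) + card (A \<inter> B)"
    using assms by (subst card_Un_disjoint[symmetric]) (auto intro: arg_cong[where f = card])
  moreover have "card B = card (B - A) + card (A \<inter> B)"
    using assms by (subst card_Un_disjoint[symmetric]) (auto intro: arg_cong[where f = card])
  ultimately show ?thesis by simp
qed

lemma even_card_symdiff:
  "finite A \<Longrightarrow> finite B \<Longrightarrow> even (card (A \<triangle> B)) \<longleftrightarrow> (even (card A) \<longleftrightarrow> even (card B))"
  using card_symdiff[of A B] by presburger

lemma prod_symdiff:
  fixes f :: "'b \<Rightarrow> 'a::comm_ring_1"
  assumes "finite A" "finite B" "\<And>x. f x * f x = 1"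
  shows "prod f (A \<triangle> B) = prod f A * prod f B"
proof -
  have "prod f A = prod f (A - B) * prod f (A \<inter> B)"
    using prod.subset_diff[of "A \<inter> B" A f] assms by (simp add: Diff_Int)
  moreover have "prod f B = prod f (B - A) * prod f (A \<inter> B)"
    using prod.subset_diff[of "A \<inter> B" B f] assms by (simp add: Diff_Int Int_commute)
  moreover have "prod f (A \<inter> B) * prod f (A \<inter> B) = 1"
    by (simp add: prod.distrib[symmetric] assms(3))
  moreover have "prod f (A \<triangle> B) = prod f (A - B) * prod f (B - A)"
    unfolding symdiff_def using assms by (subst prod.union_disjoint) auto
  ultimately show ?thesis
    by (simp add: algebra_simps)
qed

definition blade_sign :: "nat set \<Rightarrow> nat set \<Rightarrow> 'a::field" where
  "blade_sign A B = (\<Prod>a\<in>A. \<Prod>b\<in>B. if b < a then -1 else 1)"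

lemma blade_sign_empty [simp]: "blade_sign {} B = 1" "blade_sign A {} = 1"
  by (simp_all add: blade_sign_def)

lemma if_neg_one_squared [simp]: "(if P then -1 else 1) * (if P then -1 else 1) = (1::'a::comm_ring_1)"
  by simp

lemma blade_sign_squared: "blade_sign A B * blade_sign A B = 1"
  unfolding blade_sign_def by (simp add: prod.distrib[symmetric])

lemma blade_sign_nonzero: "blade_sign A B \<noteq> 0"
  using blade_sign_squared[of A B] by (metis mult_zero_left zero_neq_one)

lemma blade_sign_symdiff_left:
  "finite A1 \<Longrightarrow> finite A2 \<Longrightarrow> blade_sign (A1 \<triangle> A2) B = blade_sign A1 B * blade_sign A2 B"
  unfolding blade_sign_def by (rule prod_symdiff) (simp_all add: prod.distrib[symmetric])

lemma blade_sign_symdiff_right: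
  "finite B1 \<Longrightarrow> finite B2 \<Longrightarrow> blade_sign A (B1 \<triangle> B2) = blade_sign A B1 * blade_sign A B2"
  unfolding blade_sign_def by (simp add: prod_symdiff prod.distrib[symmetric])

lemma blade_sign_converse: "blade_sign B A = (blade_sign A B * blade_sign B A) * blade_sign A B"
proof -
  have "(blade_sign A B * blade_sign B A) * blade_sign A B = (blade_sign A B * blade_sign A B) * blade_sign B A"
    by (simp only: ac_simps)
  then show ?thesis
    by (simp add: blade_sign_squared)
qed

lemma blade_sign_swap:
  "blade_sign A B * blade_sign B A = (\<Prod>a\<in>A. \<Prod>b\<in>B. if a = b then 1 else -1)"
proof -
  have "blade_sign A B * blade_sign B A
      = (\<Prod>a\<in>A. \<Prod>b\<in>B. (if b < a then -1 else 1) * (if a < b then -1 else 1))"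
    unfolding blade_sign_def by (subst (2) prod.swap) (simp add: prod.distrib[symmetric])
  also have "\<dots> = (\<Prod>a\<in>A. \<Prod>b\<in>B. if a = b then 1 else -1)"
    by (intro prod.cong refl) auto
  finally show ?thesis .
qed

lemma blade_coeff_eq:
  assumes "finite A" "finite B"
  shows "blade_coeff eta A B = blade_sign A B * prod eta (A \<inter> B)"
proof -
  have "(\<Prod>b\<in>B. if b < a then -1 else 1) = (-1::'a) ^ card {b\<in>B. b < a}" for a
    using assms(2) by (simp add: prod.If_cases Int_def conj_commute)
  moreover have "{(a, b). a \<in> A \<and> b \<in> B \<and> b < a} = Sigma A (\<lambda>a. {b\<in>B. b < a})"
    by auto
  moreover have "card (Sigma A (\<lambda>a. {b\<in>B. b < a})) = (\<Sum>a\<in>A. card {b\<in>B. b < a})"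
    using assms by (intro card_SigmaI) auto
  ultimately show ?thesis
    unfolding blade_coeff_def blade_sign_def by (simp add: power_sum)
qed

lemma blade_coeff_nonzero:
  assumes "\<And>i. eta i \<noteq> 0" "finite A" "finite B"
  shows "blade_coeff eta A B \<noteq> 0"
  using assms by (simp add: blade_coeff_eq blade_sign_nonzero)

lemma blade_coeff_cocycle:
  assumes "finite A" "finite B" "finite E"
  shows "blade_coeff eta A B * blade_coeff eta (A \<triangle> B) E
       = blade_coeff eta B E * blade_coeff eta A (B \<triangle> E)"
proof -
  let ?M = "(A \<inter> B) \<union> (A \<inter> E) \<union> (B \<inter> E)"
  have "?M = (A \<inter> B) \<union> ((A \<triangle> B) \<inter> E)"
    by (auto simp: symdiff_def)
  then have left: "prod eta (A \<inter> B) * prod eta ((A \<triangle> B) \<inter> E) = prod eta ?M"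
    using assms by (simp only:) (rule prod.union_disjoint[symmetric], auto simp: symdiff_def)
  have "?M = (B \<inter> E) \<union> (A \<inter> (B \<triangle> E))"
    by (auto simp: symdiff_def)
  then have right: "prod eta (B \<inter> E) * prod eta (A \<inter> (B \<triangle> E)) = prod eta ?M"
    using assms by (simp only:) (rule prod.union_disjoint[symmetric], auto simp: symdiff_def)
  have signs: "blade_sign A B * blade_sign (A \<triangle> B) E = (blade_sign B E * blade_sign A (B \<triangle> E) :: 'a)"
    using assms by (simp add: blade_sign_symdiff_left blade_sign_symdiff_right ac_simps)
  have "blade_coeff eta A B * blade_coeff eta (A \<triangle> B) E
      = (blade_sign A B * blade_sign (A \<triangle> B) E) * (prod eta (A \<inter> B) * prod eta ((A \<triangle> B) \<inter> E))"
    using assms by (simp add: blade_coeff_eq ac_simps)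
  also have "\<dots> = (blade_sign B E * blade_sign A (B \<triangle> E)) * (prod eta (B \<inter> E) * prod eta (A \<inter> (B \<triangle> E)))"
    by (simp only: signs left right)
  also have "\<dots> = blade_coeff eta B E * blade_coeff eta A (B \<triangle> E)"
    using assms by (simp add: blade_coeff_eq ac_simps)
  finally show ?thesis .
qed

section \<open>The Clifford product\<close>

lemma sum_Pow_symdiff_reindex:
  assumes "A \<subseteq> U" "finite U"
  shows "(\<Sum>B\<in>Pow U. f B) = (\<Sum>B\<in>Pow U. f (A \<triangle> B))"
  by (rule sum.reindex_bij_witness[where i = "(\<triangle>) A" and j = "(\<triangle>) A"])
     (use assms in \<open>simp_all add: symdiff_subset\<close>)

lemma cl_mult_apply:
  assumes "C \<subseteq> {..<n}"
  shows "cl_mult eta n x y C = (\<Sum>A\<in>Pow {..<n}. x A * y (A \<triangle> C) * blade_coeff eta A (A \<triangle> C))"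
  unfolding cl_mult_def symdiff_def[symmetric]
proof (intro sum.cong refl)
  fix A assume A: "A \<in> Pow {..<n}"
  have "(\<Sum>B\<in>Pow {..<n}. if A \<triangle> B = C then x A * y B * blade_coeff eta A B else 0)
      = (\<Sum>B\<in>Pow {..<n}. if B = A \<triangle> C then x A * y B * blade_coeff eta A B else 0)"
    by (simp only: symdiff_eq_iff)
  also have "\<dots> = x A * y (A \<triangle> C) * blade_coeff eta A (A \<triangle> C)"
    using A assms by (simp add: symdiff_subset)
  finally show "(\<Sum>B\<in>Pow {..<n}. if A \<triangle> B = C then x A * y B * blade_coeff eta A B else 0)
      = x A * y (A \<triangle> C) * blade_coeff eta A (A \<triangle> C)" .
qed

lemma cl_mult_apply_swapped:
  assumes "C \<subseteq> {..<n}"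
  shows "cl_mult eta n x y C = (\<Sum>A\<in>Pow {..<n}. x (A \<triangle> C) * y A * blade_coeff eta (A \<triangle> C) A)"
  unfolding cl_mult_apply[OF assms]
  by (subst sum_Pow_symdiff_reindex[OF assms]) (simp_all add: symdiff_commute)

lemma cl_mult_outside: "\<not> C \<subseteq> {..<n} \<Longrightarrow> cl_mult eta n x y C = 0"
  unfolding cl_mult_def by (intro sum.neutral ballI) auto

lemma cl_mult_in_space [simp]: "cl_mult eta n x y \<in> cl_space n"
  unfolding cl_space_def using cl_mult_outside by blast

lemma cl_mult_mult_apply:
  assumes D: "D \<subseteq> {..<n}"
  shows "cl_mult eta n (cl_mult eta n x y) z D = (\<Sum>A\<in>Pow {..<n}. \<Sum>B\<in>Pow {..<n}.
           x A * y B * z (A \<triangle> B \<triangle> D) * (blade_coeff eta A B * blade_coeff eta (A \<triangle> B) (A \<triangle> B \<triangle> D)))"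
proof -
  let ?c = "blade_coeff eta" and ?P = "Pow {..<n}"
  have "cl_mult eta n (cl_mult eta n x y) z D
     = (\<Sum>C\<in>?P. \<Sum>A\<in>?P. x A * y (A \<triangle> C) * ?c A (A \<triangle> C) * z (C \<triangle> D) * ?c C (C \<triangle> D))"
    unfolding cl_mult_apply[OF D] by (intro sum.cong refl) (simp add: cl_mult_apply sum_distrib_right)
  also have "\<dots> = (\<Sum>A\<in>?P. \<Sum>C\<in>?P. x A * y (A \<triangle> C) * ?c A (A \<triangle> C) * z (C \<triangle> D) * ?c C (C \<triangle> D))"
    by (rule sum.swap)
  also have "\<dots> = (\<Sum>A\<in>?P. \<Sum>B\<in>?P. x A * y B * ?c A B * z (A \<triangle> B \<triangle> D) * ?c (A \<triangle> B) (A \<triangle> B \<triangle> D))"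
  proof (rule sum.cong[OF refl])
    fix A assume "A \<in> ?P"
    then show "(\<Sum>C\<in>?P. x A * y (A \<triangle> C) * ?c A (A \<triangle> C) * z (C \<triangle> D) * ?c C (C \<triangle> D))
      = (\<Sum>B\<in>?P. x A * y B * ?c A B * z (A \<triangle> B \<triangle> D) * ?c (A \<triangle> B) (A \<triangle> B \<triangle> D))"
      by (subst sum_Pow_symdiff_reindex[of A]) auto
  qed
  finally show ?thesis by (simp add: ac_simps)
qed

lemma cl_mult_assoc: "cl_mult eta n (cl_mult eta n x y) z = cl_mult eta n x (cl_mult eta n y z)"
proof
  fix D
  show "cl_mult eta n (cl_mult eta n x y) z D = cl_mult eta n x (cl_mult eta n y z) D"
  proof (cases "D \<subseteq> {..<n}")
    case D: True
    let ?c = "blade_coeff eta" and ?P = "Pow {..<n}"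
    have right: "cl_mult eta n x (cl_mult eta n y z) D = (\<Sum>A\<in>?P. \<Sum>B\<in>?P.
        x A * y B * z (B \<triangle> (A \<triangle> D)) * (?c B (B \<triangle> (A \<triangle> D)) * ?c A (A \<triangle> D)))"
      unfolding cl_mult_apply[OF D]
      by (intro sum.cong refl) (simp add: cl_mult_apply symdiff_subset D sum_distrib_left sum_distrib_right ac_simps)
    have cocycle: "?c A B * ?c (A \<triangle> B) (B \<triangle> (A \<triangle> D)) = ?c B (B \<triangle> (A \<triangle> D)) * ?c A (A \<triangle> D)"
      and shift: "A \<triangle> B \<triangle> D = B \<triangle> (A \<triangle> D)"
      if "A \<in> ?P" "B \<in> ?P" for A B
    proof -
      show "A \<triangle> B \<triangle> D = B \<triangle> (A \<triangle> D)" by (auto simp: symdiff_def)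
      have "finite A" "finite B" "finite D"
        using that D by (auto intro: finite_subset_lessThan)
      then show "?c A B * ?c (A \<triangle> B) (B \<triangle> (A \<triangle> D)) = ?c B (B \<triangle> (A \<triangle> D)) * ?c A (A \<triangle> D)"
        using blade_coeff_cocycle[of A B "B \<triangle> (A \<triangle> D)" eta] by simp
    qed
    show ?thesis
      unfolding cl_mult_mult_apply[OF D] right by (intro sum.cong refl) (simp add: shift cocycle)
  qed (simp add: cl_mult_outside)
qed

text \<open>Multivectors are added pointwise, via \<^theory>\<open>HOL-Library.Function_Algebras\<close>. The pointwise
  product and the numerals of that theory (e.g. \<open>1 = (\<lambda>_. 1)\<close>) are not the Clifford ones.\<close>

definition cl_scale :: "'a::field \<Rightarrow> 'a mvec \<Rightarrow> 'a mvec" where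
  "cl_scale c x = (\<lambda>A. c * x A)"

definition cl_blade :: "nat set \<Rightarrow> 'a::field mvec" where
  "cl_blade B = (\<lambda>A. if A = B then 1 else 0)"

lemma cl_scale_apply [simp]: "cl_scale c x A = c * x A"
  by (simp add: cl_scale_def)

lemma cl_scale_scale [simp]: "cl_scale a (cl_scale b x) = cl_scale (a * b) x"
  by (simp add: cl_scale_def mult.assoc)

lemma cl_scale_one [simp]: "cl_scale 1 x = x" and cl_scale_zero [simp]: "cl_scale 0 x = 0"
  by (simp_all add: cl_scale_def fun_eq_iff)

lemma cl_scale_eq_zero_iff: "cl_scale c x = 0 \<longleftrightarrow> c = 0 \<or> x = 0"
  by (auto simp: cl_scale_def fun_eq_iff)

lemma cl_space_iff: "x \<in> cl_space n \<longleftrightarrow> (\<forall>A. \<not> A \<subseteq> {..<n} \<longrightarrow> x A = 0)"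
  unfolding cl_space_def by blast

lemma cl_space_eqI:
  assumes "x \<in> cl_space n" "y \<in> cl_space n" "\<And>C. C \<subseteq> {..<n} \<Longrightarrow> x C = y C"
  shows "x = y"
proof
  fix C show "x C = y C"
    using assms by (cases "C \<subseteq> {..<n}") (auto simp: cl_space_iff)
qed

lemma cl_space_add [simp]: "x \<in> cl_space n \<Longrightarrow> y \<in> cl_space n \<Longrightarrow> x + y \<in> cl_space n"
  and cl_space_scale [simp]: "x \<in> cl_space n \<Longrightarrow> cl_scale c x \<in> cl_space n"
  and cl_space_zero [simp]: "0 \<in> cl_space n"
  and cl_space_one [simp]: "cl_one \<in> cl_space n"
  and cl_space_blade: "B \<subseteq> {..<n} \<Longrightarrow> cl_blade B \<in> cl_space n"
  by (simp_all add: cl_space_iff cl_one_def cl_blade_def)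

lemma cl_mult_add_left: "cl_mult eta n (x + y) z = cl_mult eta n x z + cl_mult eta n y z"
  by (rule cl_space_eqI[where n = n]) (simp_all add: cl_mult_apply sum.distrib algebra_simps)

lemma cl_mult_add_right: "cl_mult eta n z (x + y) = cl_mult eta n z x + cl_mult eta n z y"
  by (rule cl_space_eqI[where n = n]) (simp_all add: cl_mult_apply sum.distrib algebra_simps)

lemma cl_mult_scale_left: "cl_mult eta n (cl_scale c x) y = cl_scale c (cl_mult eta n x y)"
  by (rule cl_space_eqI[where n = n]) (simp_all add: cl_mult_apply sum_distrib_left algebra_simps)

lemma cl_mult_scale_right: "cl_mult eta n x (cl_scale c y) = cl_scale c (cl_mult eta n x y)"
  by (rule cl_space_eqI[where n = n]) (simp_all add: cl_mult_apply sum_distrib_left algebra_simps)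

lemma cl_mult_zero_left [simp]: "cl_mult eta n 0 y = 0"
  using cl_mult_scale_left[of eta n 0 0 y] by simp

lemma cl_mult_zero_right [simp]: "cl_mult eta n x 0 = 0"
  using cl_mult_scale_right[of eta n x 0 0] by simp

lemma cl_mult_blade_left:
  assumes "B \<subseteq> {..<n}" "C \<subseteq> {..<n}"
  shows "cl_mult eta n (cl_blade B) x C = blade_coeff eta B (B \<triangle> C) * x (B \<triangle> C)"
proof -
  have "cl_mult eta n (cl_blade B) x C
      = (\<Sum>A\<in>Pow {..<n}. if A = B then blade_coeff eta B (B \<triangle> C) * x (B \<triangle> C) else 0)"
    unfolding cl_mult_apply[OF assms(2)] by (intro sum.cong) (auto simp: cl_blade_def)
  then show ?thesis using assms by simp
qed

lemma cl_mult_blade_right: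
  assumes "B \<subseteq> {..<n}" "C \<subseteq> {..<n}"
  shows "cl_mult eta n x (cl_blade B) C = x (B \<triangle> C) * blade_coeff eta (B \<triangle> C) B"
proof -
  have "cl_mult eta n x (cl_blade B) C
      = (\<Sum>A\<in>Pow {..<n}. if A = B then x (B \<triangle> C) * blade_coeff eta (B \<triangle> C) B else 0)"
    unfolding cl_mult_apply_swapped[OF assms(2)] by (intro sum.cong) (auto simp: cl_blade_def)
  then show ?thesis using assms by simp
qed

lemma cl_blade_mult_blade:
  assumes "A \<subseteq> {..<n}" "B \<subseteq> {..<n}"
  shows "cl_mult eta n (cl_blade A) (cl_blade B) = cl_scale (blade_coeff eta A B) (cl_blade (A \<triangle> B))"
proof
  fix C
  show "cl_mult eta n (cl_blade A) (cl_blade B) C = cl_scale (blade_coeff eta A B) (cl_blade (A \<triangle> B)) C"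
  proof (cases "C \<subseteq> {..<n}")
    case True
    have "A \<triangle> C = B \<longleftrightarrow> C = A \<triangle> B"
      by (auto simp: symdiff_def)
    with True show ?thesis
      unfolding cl_mult_blade_left[OF assms(1) True] by (auto simp: cl_blade_def)
  next
    case False
    then have "A \<triangle> B \<noteq> C" using symdiff_subset[OF assms] by auto
    then show ?thesis using False by (simp add: cl_mult_outside cl_blade_def)
  qed
qed

lemma blade_coeff_empty [simp]: "blade_coeff eta {} B = 1" "blade_coeff eta A {} = 1"
  by (simp_all add: blade_coeff_def)

lemma cl_one_eq_blade: "cl_one = cl_blade {}"
  unfolding cl_one_def cl_blade_def by auto

lemma cl_mult_one_left: "x \<in> cl_space n \<Longrightarrow> cl_mult eta n cl_one x = x"
  by (rule cl_space_eqI[where n = n]) (simp_all add: cl_one_eq_blade cl_mult_blade_left)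

lemma cl_mult_one_right: "x \<in> cl_space n \<Longrightarrow> cl_mult eta n x cl_one = x"
  by (rule cl_space_eqI[where n = n]) (simp_all add: cl_one_eq_blade cl_mult_blade_right)

definition cl_parity :: "nat \<Rightarrow> bool \<Rightarrow> 'a::field mvec set" where
  "cl_parity n b = {x \<in> cl_space n. \<forall>A. x A \<noteq> 0 \<longrightarrow> even (card A) = b}"

definition parity_part :: "bool \<Rightarrow> 'a::field mvec \<Rightarrow> 'a mvec" where
  "parity_part b x = (\<lambda>A. if even (card A) = b then x A else 0)"

lemma cl_even_eq_parity: "cl_even n = cl_parity n True"
  and cl_odd_eq_parity: "cl_odd n = cl_parity n False"
  by (auto simp: cl_even_def cl_odd_def cl_parity_def)

lemma cl_parity_space: "x \<in> cl_parity n b \<Longrightarrow> x \<in> cl_space n"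
  by (simp add: cl_parity_def)

lemma cl_parity_scale: "x \<in> cl_parity n b \<Longrightarrow> cl_scale c x \<in> cl_parity n b"
  by (simp add: cl_parity_def)

lemma cl_grade_one_odd: "v \<in> cl_grade n 1 \<Longrightarrow> v \<in> cl_parity n False"
  by (simp add: cl_grade_def cl_parity_def)

lemma cl_blade_singleton_vector: "i < n \<Longrightarrow> cl_blade {i} \<in> cl_grade n 1"
  by (simp add: cl_grade_def cl_space_blade) (simp add: cl_blade_def)

lemma cl_blade_parity: "B \<subseteq> {..<n} \<Longrightarrow> cl_blade B \<in> cl_parity n (even (card B))"
  by (simp add: cl_parity_def cl_space_blade) (simp add: cl_blade_def)

lemma cl_mult_nonzero_support:
  assumes "cl_mult eta n x y C \<noteq> 0"
  obtains A where "C \<subseteq> {..<n}" "A \<subseteq> {..<n}" "x A \<noteq> 0" "y (A \<triangle> C) \<noteq> 0"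
proof -
  have C: "C \<subseteq> {..<n}"
    using assms cl_mult_outside by blast
  with assms have "(\<Sum>A\<in>Pow {..<n}. x A * y (A \<triangle> C) * blade_coeff eta A (A \<triangle> C)) \<noteq> 0"
    by (simp add: cl_mult_apply)
  then obtain A where "A \<in> Pow {..<n}" "x A * y (A \<triangle> C) * blade_coeff eta A (A \<triangle> C) \<noteq> 0"
    by (rule sum.not_neutral_contains_not_neutral)
  with C that show ?thesis by simp
qed

lemma cl_mult_parity:
  assumes "x \<in> cl_parity n b1" "y \<in> cl_parity n b2"
  shows "cl_mult eta n x y \<in> cl_parity n (b1 = b2)"
  unfolding cl_parity_def
proof (intro CollectI conjI allI impI cl_mult_in_space)
  fix C assume "cl_mult eta n x y C \<noteq> 0"
  then obtain A where C: "C \<subseteq> {..<n}" and A: "A \<subseteq> {..<n}" "x A \<noteq> 0" "y (A \<triangle> C) \<noteq> 0"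
    by (rule cl_mult_nonzero_support)
  have "finite A" "finite C"
    using A C by (auto intro: finite_subset_lessThan)
  then have "even (card (A \<triangle> (A \<triangle> C))) \<longleftrightarrow> (even (card A) \<longleftrightarrow> even (card (A \<triangle> C)))"
    by (intro even_card_symdiff) auto
  with A assms show "even (card C) = (b1 = b2)"
    unfolding cl_parity_def by auto
qed

lemma parity_part_in_parity: "x \<in> cl_space n \<Longrightarrow> parity_part b x \<in> cl_parity n b"
  by (auto simp: parity_part_def cl_parity_def cl_space_def)

lemma parity_part_space: "x \<in> cl_space n \<Longrightarrow> parity_part b x \<in> cl_space n"
  by (rule cl_parity_space[OF parity_part_in_parity])

lemma parity_part_decompose: "parity_part True x + parity_part False x = x"
  by (simp add: parity_part_def fun_eq_iff)

lemma parity_part_add: "parity_part b (x + y) = parity_part b x + parity_part b y"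
  and parity_part_scale: "parity_part b (cl_scale c x) = cl_scale c (parity_part b x)"
  by (simp_all add: parity_part_def fun_eq_iff)

lemma parity_part_parity_part [simp]:
  "parity_part b (parity_part c x) = (if b = c then parity_part b x else 0)"
  by (simp add: parity_part_def fun_eq_iff)

lemma parity_part_same: "x \<in> cl_parity n b \<Longrightarrow> parity_part b x = x"
  and parity_part_other: "x \<in> cl_parity n (\<not> b) \<Longrightarrow> parity_part b x = 0"
  by (auto simp: parity_part_def cl_parity_def fun_eq_iff)

section \<open>Reversion\<close>

definition rev_sign :: "nat set \<Rightarrow> 'a::field" where
  "rev_sign A = (-1) ^ (card A * (card A - 1) div 2)"

lemma cl_rev_apply: "cl_rev x A = rev_sign A * x A"
  by (simp add: cl_rev_def rev_sign_def)

lemma rev_sign_squared: "rev_sign A * rev_sign A = 1"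
  by (simp add: rev_sign_def power_mult_distrib[symmetric])

lemma rev_sign_insert:
  assumes "finite F" "x \<notin> F"
  shows "rev_sign (insert x F) = rev_sign F * (-1) ^ card F"
proof -
  have "Suc k * (Suc k - 1) div 2 = k * (k - 1) div 2 + k" for k :: nat
    by (cases k) (simp_all add: algebra_simps)
  then show ?thesis
    using assms by (simp add: rev_sign_def power_add)
qed

lemma blade_sign_insert_insert:
  assumes "finite F" "x \<notin> F"
  shows "blade_sign (insert x F) (insert x F) = blade_sign F F * (-1::'a::field) ^ card F"
proof -
  let ?s = "\<lambda>a b. if b < a then -1 else (1::'a)"
  have "blade_sign (insert x F) (insert x F)
      = (\<Prod>b\<in>insert x F. ?s x b) * (blade_sign F F * (\<Prod>a\<in>F. ?s a x))"
    using assms by (simp add: blade_sign_def prod.distrib)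
  also have "\<dots> = blade_sign F F * (\<Prod>b\<in>F. ?s x b * ?s b x)"
    using assms by (simp add: prod.distrib ac_simps)
  also have "(\<Prod>b\<in>F. ?s x b * ?s b x) = (\<Prod>b\<in>F. -1)"
    using assms by (intro prod.cong refl) auto
  finally show ?thesis by simp
qed

lemma rev_sign_eq_blade_sign: "finite A \<Longrightarrow> rev_sign A = blade_sign A A"
  by (induction A rule: finite_induct) (simp_all add: rev_sign_insert blade_sign_insert_insert, simp add: rev_sign_def)

lemma blade_coeff_reverse:
  assumes "finite A" "finite B"
  shows "blade_coeff eta A B * rev_sign (A \<triangle> B) = rev_sign A * rev_sign B * blade_coeff eta B A"
proof -
  have "blade_coeff eta A B * rev_sign (A \<triangle> B)
      = (blade_sign A B * blade_sign A B) * (blade_sign B A * prod eta (A \<inter> B)) * rev_sign A * rev_sign B"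
    using assms by (simp add: blade_coeff_eq rev_sign_eq_blade_sign blade_sign_symdiff_left
        blade_sign_symdiff_right ac_simps)
  also have "\<dots> = rev_sign A * rev_sign B * blade_coeff eta B A"
    using assms by (simp add: blade_sign_squared blade_coeff_eq Int_commute ac_simps)
  finally show ?thesis .
qed

lemma cl_rev_mult: "cl_rev (cl_mult eta n x y) = cl_mult eta n (cl_rev y) (cl_rev x)"
proof (rule cl_space_eqI[where n = n])
  show "cl_rev (cl_mult eta n x y) \<in> cl_space n"
    by (simp add: cl_space_iff cl_rev_apply cl_mult_outside)
next
  fix C assume C: "C \<subseteq> {..<n}"
  have summand: "rev_sign C * (x A * y (A \<triangle> C) * blade_coeff eta A (A \<triangle> C))
      = rev_sign (A \<triangle> C) * y (A \<triangle> C) * (rev_sign A * x A) * blade_coeff eta (A \<triangle> C) A"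
    if "A \<in> Pow {..<n}" for A
  proof -
    have "finite A" "finite C"
      using that C by (auto intro: finite_subset_lessThan)
    with blade_coeff_reverse[of A "A \<triangle> C" eta] show ?thesis by (simp add: ac_simps)
  qed
  show "cl_rev (cl_mult eta n x y) C = cl_mult eta n (cl_rev y) (cl_rev x) C"
    unfolding cl_rev_apply cl_mult_apply[OF C, of eta x y] cl_mult_apply_swapped[OF C, of eta "cl_rev y"]
      sum_distrib_left
    by (rule sum.cong[OF refl], rule summand)
qed simp

lemma cl_rev_rev [simp]: "cl_rev (cl_rev x) = x"
  by (simp add: fun_eq_iff cl_rev_apply mult.assoc[symmetric] rev_sign_squared)

lemma cl_rev_one [simp]: "cl_rev cl_one = cl_one"
  by (simp add: fun_eq_iff cl_rev_apply cl_one_def rev_sign_def)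

lemma cl_rev_scale: "cl_rev (cl_scale c x) = cl_scale c (cl_rev x)"
  by (simp add: fun_eq_iff cl_rev_apply ac_simps)

lemma cl_rev_eq_zero_iff: "cl_rev x A = 0 \<longleftrightarrow> x A = 0"
  by (simp add: cl_rev_apply rev_sign_def)

lemma cl_rev_space: "x \<in> cl_space n \<Longrightarrow> cl_rev x \<in> cl_space n"
  by (simp add: cl_space_iff cl_rev_apply)

lemma cl_rev_parity: "x \<in> cl_parity n b \<Longrightarrow> cl_rev x \<in> cl_parity n b"
  by (simp add: cl_parity_def cl_rev_space cl_rev_eq_zero_iff)

lemma cl_rev_vector: "v \<in> cl_grade n 1 \<Longrightarrow> cl_rev v = v"
  by (auto simp: fun_eq_iff cl_rev_apply cl_grade_def rev_sign_def)

lemma cl_invertibleI: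
  "x \<in> cl_space n \<Longrightarrow> y \<in> cl_space n \<Longrightarrow> cl_mult eta n x y = cl_one \<Longrightarrow> cl_mult eta n y x = cl_one
    \<Longrightarrow> cl_invertible eta n x"
  unfolding cl_invertible_def by blast

lemma cl_invertible_space: "cl_invertible eta n x \<Longrightarrow> x \<in> cl_space n"
  unfolding cl_invertible_def by blast

lemma cl_invertibleD:
  assumes "cl_invertible eta n x"
  shows cl_inv_space: "cl_inv eta n x \<in> cl_space n"
    and cl_mult_inv_right: "cl_mult eta n x (cl_inv eta n x) = cl_one"
    and cl_mult_inv_left: "cl_mult eta n (cl_inv eta n x) x = cl_one"
proof -
  have "\<exists>y. y \<in> cl_space n \<and> cl_mult eta n x y = cl_one \<and> cl_mult eta n y x = cl_one"
    using assms unfolding cl_invertible_def by blast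
  then have "cl_inv eta n x \<in> cl_space n \<and> cl_mult eta n x (cl_inv eta n x) = cl_one
      \<and> cl_mult eta n (cl_inv eta n x) x = cl_one"
    unfolding cl_inv_def by (rule someI_ex)
  then show "cl_inv eta n x \<in> cl_space n" "cl_mult eta n x (cl_inv eta n x) = cl_one"
    "cl_mult eta n (cl_inv eta n x) x = cl_one"
    by simp_all
qed

lemma cl_left_inverse_eq_right_inverse:
  assumes "y \<in> cl_space n" "z \<in> cl_space n" "cl_mult eta n y x = cl_one" "cl_mult eta n x z = cl_one"
  shows "y = z"
proof -
  have "y = cl_mult eta n y (cl_mult eta n x z)"
    using assms by (simp add: cl_mult_one_right)
  also have "\<dots> = cl_mult eta n (cl_mult eta n y x) z"
    by (simp add: cl_mult_assoc)
  also have "\<dots> = z"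
    using assms by (simp add: cl_mult_one_left)
  finally show ?thesis .
qed

lemma cl_inv_eq_left:
  assumes "cl_invertible eta n x" "y \<in> cl_space n" "cl_mult eta n y x = cl_one"
  shows "cl_inv eta n x = y"
  using cl_left_inverse_eq_right_inverse[OF assms(2) cl_inv_space assms(3) cl_mult_inv_right, OF assms(1,1)]
  by simp

lemma cl_inv_eq_right:
  assumes "cl_invertible eta n x" "y \<in> cl_space n" "cl_mult eta n x y = cl_one"
  shows "cl_inv eta n x = y"
  by (rule cl_left_inverse_eq_right_inverse[OF cl_inv_space assms(2) cl_mult_inv_left assms(3), OF assms(1,1)])

lemma cl_mult_inv_cancel_left:
  "cl_invertible eta n x \<Longrightarrow> y \<in> cl_space n \<Longrightarrow> cl_mult eta n (cl_inv eta n x) (cl_mult eta n x y) = y"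
  and cl_mult_inv_cancel_left':
  "cl_invertible eta n x \<Longrightarrow> y \<in> cl_space n \<Longrightarrow> cl_mult eta n x (cl_mult eta n (cl_inv eta n x) y) = y"
  by (simp_all add: cl_mult_assoc[symmetric] cl_invertibleD cl_mult_one_left)

lemma cl_mult_inv_cancel_right:
  "cl_invertible eta n x \<Longrightarrow> y \<in> cl_space n \<Longrightarrow> cl_mult eta n (cl_mult eta n y x) (cl_inv eta n x) = y"
  and cl_mult_inv_cancel_right':
  "cl_invertible eta n x \<Longrightarrow> y \<in> cl_space n \<Longrightarrow> cl_mult eta n (cl_mult eta n y (cl_inv eta n x)) x = y"
  by (simp_all add: cl_mult_assoc cl_invertibleD cl_mult_one_right)

lemma cl_mult_eq_zero_cancel_left:
  "cl_invertible eta n x \<Longrightarrow> y \<in> cl_space n \<Longrightarrow> cl_mult eta n x y = 0 \<Longrightarrow> y = 0"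
  using cl_mult_inv_cancel_left[of eta n x y] by simp

lemma cl_mult_eq_zero_cancel_right:
  "cl_invertible eta n y \<Longrightarrow> x \<in> cl_space n \<Longrightarrow> cl_mult eta n x y = 0 \<Longrightarrow> x = 0"
  using cl_mult_inv_cancel_right[of eta n y x] by simp

lemma cl_invertible_mult:
  assumes "cl_invertible eta n x" "cl_invertible eta n y"
  shows "cl_invertible eta n (cl_mult eta n x y)"
proof (rule cl_invertibleI)
  let ?z = "cl_mult eta n (cl_inv eta n y) (cl_inv eta n x)"
  show "cl_mult eta n (cl_mult eta n x y) ?z = cl_one"
    using assms by (simp add: cl_mult_assoc cl_mult_inv_cancel_left' cl_invertibleD)
  show "cl_mult eta n ?z (cl_mult eta n x y) = cl_one"
    using assms by (simp add: cl_mult_assoc cl_mult_inv_cancel_left cl_invertibleD cl_invertible_space)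
qed simp_all

lemma cl_inv_mult:
  assumes "cl_invertible eta n x" "cl_invertible eta n y"
  shows "cl_inv eta n (cl_mult eta n x y) = cl_mult eta n (cl_inv eta n y) (cl_inv eta n x)"
  using assms
  by (intro cl_inv_eq_right cl_invertible_mult) (simp_all add: cl_mult_assoc cl_mult_inv_cancel_left' cl_invertibleD)

lemma cl_invertible_rev:
  assumes "cl_invertible eta n x"
  shows "cl_invertible eta n (cl_rev x)"
proof (rule cl_invertibleI)
  show "cl_mult eta n (cl_rev x) (cl_rev (cl_inv eta n x)) = cl_one"
    and "cl_mult eta n (cl_rev (cl_inv eta n x)) (cl_rev x) = cl_one"
    using assms by (simp_all add: cl_rev_mult[symmetric] cl_invertibleD)
qed (use assms in \<open>simp_all add: cl_rev_space cl_invertibleD cl_invertible_space\<close>)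

lemma cl_invertible_inv: "cl_invertible eta n x \<Longrightarrow> cl_invertible eta n (cl_inv eta n x)"
  by (rule cl_invertibleI[of _ n x]) (simp_all add: cl_invertibleD cl_invertible_space)

lemma not_cl_invertible_zero: "\<not> cl_invertible eta n 0"
proof
  assume "cl_invertible eta n 0"
  then have "(0 :: 'a mvec) = cl_one"
    using cl_mult_inv_right by fastforce
  then show False
    unfolding cl_one_def by (metis zero_fun_apply zero_neq_one)
qed

lemma cl_invertible_if_scalar_product:
  assumes "x \<in> cl_space n" "y \<in> cl_space n" "d \<noteq> 0"
    and "cl_mult eta n x y = cl_scale d cl_one" "cl_mult eta n y x = cl_scale d cl_one"
  shows "cl_invertible eta n x"
  by (rule cl_invertibleI[of x n "cl_scale (inverse d) y"])
     (use assms in \<open>simp_all add: cl_mult_scale_left cl_mult_scale_right\<close>)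

lemma cl_invertible_scalar: "c \<noteq> 0 \<Longrightarrow> cl_invertible eta n (cl_scale c cl_one)"
  by (rule cl_invertible_if_scalar_product[where y = "cl_one" and d = c])
     (simp_all add: cl_mult_one_right cl_mult_one_left)

lemma cl_invertible_one: "cl_invertible eta n cl_one"
  using cl_invertible_scalar[of 1 eta n] by simp

lemma cl_units_iff: "x \<in> cl_units eta n S \<longleftrightarrow> x \<in> S \<and> cl_invertible eta n x"
  unfolding cl_units_def by simp

section \<open>The centre\<close>

abbreviation pseudoscalar :: "nat \<Rightarrow> 'a::field mvec" where
  "pseudoscalar n \<equiv> cl_blade {..<n}"

lemma cl_center_space: "z \<in> cl_center n \<Longrightarrow> z \<in> cl_space n"
  unfolding cl_center_def cl_grade_def by (auto split: if_splits)

lemma cl_center_support: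
  assumes "z \<in> cl_center n" "z A \<noteq> 0"
  shows "A = {} \<or> (A = {..<n} \<and> odd n)"
proof -
  have A: "A \<subseteq> {..<n}"
    using assms cl_center_space unfolding cl_space_def by blast
  moreover have "card A = 0 \<or> (card A = n \<and> odd n)"
    using assms unfolding cl_center_def cl_grade_def by (auto split: if_splits)
  ultimately show ?thesis
    using finite_subset_lessThan[OF A] card_subset_eq[OF _ A] by auto
qed

lemma cl_scalar_center: "cl_scale c cl_one \<in> cl_center n"
  and cl_one_center: "cl_one \<in> cl_center n"
  and pseudoscalar_center: "odd n \<Longrightarrow> pseudoscalar n \<in> cl_center n"
  by (auto simp: cl_center_def cl_grade_def cl_space_def cl_one_def cl_blade_def)

lemma pseudoscalar_squared:
  "cl_mult eta n (pseudoscalar n) (pseudoscalar n) = cl_scale (blade_coeff eta {..<n} {..<n}) cl_one"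
  by (simp add: cl_blade_mult_blade cl_one_eq_blade)

lemma pseudoscalar_invertible:
  assumes "\<And>i. eta i \<noteq> 0"
  shows "cl_invertible eta n (pseudoscalar n)"
  using blade_coeff_nonzero[of eta "{..<n}" "{..<n}"] assms
  by (intro cl_invertible_if_scalar_product[where y = "pseudoscalar n"]) (simp_all add: cl_space_blade pseudoscalar_squared)

lemma pseudoscalar_parity: "pseudoscalar n \<in> cl_parity n (even n)"
  using cl_blade_parity[of "{..<n}" n] by simp

lemma scalar_plus_pseudoscalar_mult:
  assumes "n > 0"
  shows "cl_mult eta n (cl_scale \<alpha> cl_one + cl_scale p (pseudoscalar n)) (cl_scale \<beta> cl_one + cl_scale q (pseudoscalar n))
    = cl_scale (\<alpha> * \<beta> + p * q * blade_coeff eta {..<n} {..<n}) cl_one + cl_scale (\<alpha> * q + \<beta> * p) (pseudoscalar n)"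
proof -
  have "{..<n} \<noteq> {}"
    using assms by auto
  then show ?thesis
    by (simp add: cl_mult_add_left cl_mult_add_right cl_mult_scale_left cl_mult_scale_right
        cl_mult_one_left cl_mult_one_right cl_space_blade pseudoscalar_squared)
       (auto simp: fun_eq_iff cl_one_def cl_blade_def algebra_simps)
qed

lemma scalar_plus_pseudoscalar_center:
  "odd n \<Longrightarrow> cl_scale \<alpha> cl_one + cl_scale p (pseudoscalar n) \<in> cl_center n"
  by (auto simp: cl_center_def cl_space_def cl_one_def cl_blade_def)

lemma cl_center_rev: "z \<in> cl_center n \<Longrightarrow> cl_rev z \<in> cl_center n"
  by (auto simp: cl_center_def cl_grade_def cl_rev_space cl_rev_eq_zero_iff)

lemma cl_center_even_part_scalar:
  assumes "z \<in> cl_center n" "z \<in> cl_parity n True"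
  shows "z = cl_scale (z {}) cl_one"
proof
  fix A
  have "z A = 0" if "A \<noteq> {}"
    using assms cl_center_support[OF assms(1)] that unfolding cl_parity_def by fastforce
  then show "z A = cl_scale (z {}) cl_one A"
    by (auto simp: cl_one_def)
qed

lemma cl_center_even_dim: "even n \<Longrightarrow> z \<in> cl_center n \<Longrightarrow> z \<in> cl_parity n True"
  unfolding cl_parity_def using cl_center_space cl_center_support by fastforce

lemma cl_center_odd_dim:
  assumes "z \<in> cl_center n" "odd n"
  shows "z = cl_scale (z {}) cl_one + cl_scale (z {..<n}) (pseudoscalar n)"
proof
  fix A
  have "{..<n} \<noteq> {}"
    using assms(2) by (cases n) auto
  then show "z A = (cl_scale (z {}) cl_one + cl_scale (z {..<n}) (pseudoscalar n)) A"
    using cl_center_support[OF assms(1), of A] by (auto simp: cl_one_def cl_blade_def)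
qed

lemma cl_center_cases:
  assumes "z \<in> cl_center n"
  shows "z = cl_scale (z {}) cl_one
    \<or> odd n \<and> z {..<n} \<noteq> 0 \<and> z = cl_scale (z {}) cl_one + cl_scale (z {..<n}) (pseudoscalar n)"
proof (cases "even n")
  case True
  then show ?thesis
    using cl_center_even_part_scalar[OF assms cl_center_even_dim[OF True assms]] by simp
next
  case False
  then show ?thesis
    using cl_center_odd_dim[OF assms] by (cases "z {..<n} = 0") auto
qed

lemma cl_mult_commute_if_blade_coeff_symmetric:
  assumes "\<And>A B. A \<subseteq> {..<n} \<Longrightarrow> B \<subseteq> {..<n} \<Longrightarrow> x A \<noteq> 0 \<Longrightarrow> y B \<noteq> 0 \<Longrightarrow>
             blade_coeff eta A B = blade_coeff eta B A"
  shows "cl_mult eta n x y = cl_mult eta n y x"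
proof (rule cl_space_eqI[where n = n])
  fix C assume C: "C \<subseteq> {..<n}"
  have "x A * y (A \<triangle> C) * blade_coeff eta A (A \<triangle> C) = y (A \<triangle> C) * x A * blade_coeff eta (A \<triangle> C) A"
    if "A \<in> Pow {..<n}" for A
    using assms[of A "A \<triangle> C"] that C by (cases "x A = 0 \<or> y (A \<triangle> C) = 0") (auto simp: symdiff_subset)
  then show "cl_mult eta n x y C = cl_mult eta n y x C"
    unfolding cl_mult_apply[OF C, of eta x y] cl_mult_apply_swapped[OF C, of eta y x]
    by (rule sum.cong[OF refl])
qed simp_all

lemma blade_sign_pseudoscalar_swap:
  assumes "B \<subseteq> {..<n}"
  shows "blade_sign {..<n} B * blade_sign B {..<n} = (-1::'a::field) ^ ((n - 1) * card B)"
proof -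
  have "(\<Prod>a\<in>{..<n}. if a = b then 1 else (-1::'a)) = (-1) ^ (n - 1)" if "b \<in> B" for b
    using that assms by (subst prod.delta_remove) auto
  then have "(\<Prod>b\<in>B. \<Prod>a\<in>{..<n}. if a = b then 1 else (-1::'a)) = (\<Prod>b\<in>B. (-1) ^ (n - 1))"
    by (rule prod.cong[OF refl])
  then show ?thesis
    unfolding blade_sign_swap by (subst prod.swap) (simp add: power_mult)
qed

lemma cl_center_commute:
  assumes "z \<in> cl_center n"
  shows "cl_mult eta n z y = cl_mult eta n y z"
proof (rule cl_mult_commute_if_blade_coeff_symmetric)
  fix A B assume B: "B \<subseteq> {..<n}" and "A \<subseteq> {..<n}" "z A \<noteq> 0"
  then consider "A = {}" | "A = {..<n}" "odd n"
    using cl_center_support[OF assms] by blast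
  then show "blade_coeff eta A B = blade_coeff eta B A"
  proof cases
    case 2
    then have "blade_sign A B * blade_sign B A = (1::'a)"
      using blade_sign_pseudoscalar_swap[OF B] by simp
    then have "blade_sign B A = (blade_sign A B :: 'a)"
      using blade_sign_converse[of B A, where 'a = 'a] by simp
    then show ?thesis
      using B 2 by (simp add: blade_coeff_eq finite_subset_lessThan Int_commute)
  qed simp
qed

lemma vector_commute_even_card:
  fixes eta :: "nat \<Rightarrow> 'a::field_char_0"
  assumes eta: "\<And>i. eta i \<noteq> 0" and x: "x \<in> cl_space n" and i: "i < n"
    and commute: "cl_mult eta n (cl_blade {i}) x = cl_mult eta n x (cl_blade {i})" and B: "x B \<noteq> 0"
  shows "even (card (B - {i}))"
proof -
  have Bn: "B \<subseteq> {..<n}" and fin: "finite B"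
    using x B finite_subset_lessThan unfolding cl_space_def by auto
  have "{i} \<subseteq> {..<n}" "{i} \<triangle> B \<subseteq> {..<n}"
    using i Bn by (auto simp: symdiff_subset)
  then have "blade_coeff eta {i} B * x B = x B * blade_coeff eta B {i}"
    using fun_cong[OF commute, of "{i} \<triangle> B"] by (simp add: cl_mult_blade_left cl_mult_blade_right)
  then have "blade_sign {i} B = (blade_sign B {i} :: 'a)"
    using B eta fin by (simp add: blade_coeff_eq Int_commute)
  then have "blade_sign {i} B * blade_sign B {i} = (1::'a)"
    by (simp add: blade_sign_squared)
  moreover have "blade_sign {i} B * blade_sign B {i} = (\<Prod>b\<in>B. if b = i then 1 else (-1::'a))"
    unfolding blade_sign_swap by (auto intro: prod.cong)
  moreover have "\<dots> = (-1) ^ card (B - {i})"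
    using fin by (simp add: prod.delta_remove)
  ultimately show ?thesis
    by (simp add: minus_one_power_iff split: if_splits)
qed

lemma even_card_minus_singletons:
  fixes n :: nat
  assumes B: "B \<subseteq> {..<n}" and even: "\<And>i. i < n \<Longrightarrow> even (card (B - {i}))"
  shows "B = {} \<or> (B = {..<n} \<and> odd n)"
proof (cases "B = {}")
  case False
  then obtain i where i: "i \<in> B"
    by auto
  have fin: "finite B"
    using finite_subset_lessThan[OF B] .
  have "card (B - {i}) = card B - 1" "card B > 0"
    using fin i by (auto simp: card_gt_0_iff)
  moreover have "even (card (B - {i}))"
    using even i B by blast
  ultimately have odd: "odd (card B)"
    by presburger
  have "B = {..<n}"
  proof (rule ccontr)
    assume "B \<noteq> {..<n}"
    then obtain j where "j < n" "j \<notin> B"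
      using B by auto
    moreover have "B - {j} = B"
      using \<open>j \<notin> B\<close> by blast
    ultimately have "even (card B)"
      using even[of j] by simp
    with odd show False by simp
  qed
  with odd show ?thesis by simp
qed simp

lemma cl_center_iff:
  fixes eta :: "nat \<Rightarrow> 'a::field_char_0"
  assumes eta: "\<And>i. eta i \<noteq> 0" and x: "x \<in> cl_space n"
  shows "x \<in> cl_center n \<longleftrightarrow> (\<forall>v\<in>cl_grade n 1. cl_mult eta n v x = cl_mult eta n x v)"
proof
  assume commute: "\<forall>v\<in>cl_grade n 1. cl_mult eta n v x = cl_mult eta n x v"
  have support: "B = {} \<or> (B = {..<n} \<and> odd n)" if B: "x B \<noteq> 0" for B
  proof (rule even_card_minus_singletons)
    show "B \<subseteq> {..<n}"
      using x B unfolding cl_space_def by blast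
    fix i assume i: "i < n"
    with commute have "cl_mult eta n (cl_blade {i}) x = cl_mult eta n x (cl_blade {i})"
      using cl_blade_singleton_vector by blast
    then show "even (card (B - {i}))"
      by (rule vector_commute_even_card[OF eta x i _ B])
  qed
  have "card B = 0 \<or> (card B = n \<and> odd n)" if "x B \<noteq> 0" for B
    using support[OF that] by auto
  then show "x \<in> cl_center n"
    using x unfolding cl_center_def cl_grade_def by auto
qed (simp add: cl_center_commute)

lemma cl_center_mult:
  fixes eta :: "nat \<Rightarrow> 'a::field_char_0"
  assumes eta: "\<And>i. eta i \<noteq> 0" and z: "z \<in> cl_center n" "w \<in> cl_center n"
  shows "cl_mult eta n z w \<in> cl_center n"
proof -
  have "cl_mult eta n v (cl_mult eta n z w) = cl_mult eta n (cl_mult eta n z w) v" for v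
  proof -
    have "cl_mult eta n v (cl_mult eta n z w) = cl_mult eta n (cl_mult eta n v z) w"
      by (rule cl_mult_assoc[symmetric])
    also have "\<dots> = cl_mult eta n z (cl_mult eta n v w)"
      by (simp only: cl_center_commute[OF z(1), of eta v, symmetric] cl_mult_assoc)
    also have "\<dots> = cl_mult eta n (cl_mult eta n z w) v"
      by (simp only: cl_center_commute[OF z(2), of eta v, symmetric] cl_mult_assoc)
    finally show ?thesis .
  qed
  then show ?thesis
    using cl_center_iff[where eta = eta, OF eta cl_mult_in_space] by blast
qed

lemma cl_center_inv:
  fixes eta :: "nat \<Rightarrow> 'a::field_char_0"
  assumes eta: "\<And>i. eta i \<noteq> 0" and z: "z \<in> cl_center n" "cl_invertible eta n z"
  shows "cl_inv eta n z \<in> cl_center n"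
proof -
  let ?z' = "cl_inv eta n z"
  have "cl_mult eta n v ?z' = cl_mult eta n ?z' v" if "v \<in> cl_grade n 1" for v
  proof -
    have v: "v \<in> cl_space n"
      using that by (simp add: cl_grade_def)
    have "cl_mult eta n z (cl_mult eta n v ?z') = v"
      using z v by (simp add: cl_mult_assoc[symmetric] cl_center_commute[OF z(1)] cl_mult_inv_cancel_right)
    then have "cl_mult eta n ?z' v = cl_mult eta n ?z' (cl_mult eta n z (cl_mult eta n v ?z'))"
      by simp
    also have "\<dots> = cl_mult eta n v ?z'"
      using z by (simp add: cl_mult_inv_cancel_left)
    finally show ?thesis ..
  qed
  then show ?thesis
    using cl_center_iff[where eta = eta, OF eta cl_inv_space[OF z(2)]] by blast
qed

section \<open>The Clifford group lies in Q\<close>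

lemma parity_part_intertwines:
  assumes "T \<in> cl_space n" "v \<in> cl_parity n False" "w \<in> cl_parity n False"
    and "cl_mult eta n T v = cl_mult eta n w T"
  shows "cl_mult eta n (parity_part b T) v = cl_mult eta n w (parity_part b T)"
proof -
  have parts: "parity_part b T \<in> cl_parity n b" "parity_part (\<not> b) T \<in> cl_parity n (\<not> b)"
    using assms(1) by (simp_all add: parity_part_in_parity)
  have T: "T = parity_part b T + parity_part (\<not> b) T"
    by (simp add: parity_part_def fun_eq_iff)
  have "parity_part (\<not> b) (cl_mult eta n T v) = cl_mult eta n (parity_part b T) v"
    using cl_mult_parity[OF parts(1) assms(2), of eta] cl_mult_parity[OF parts(2) assms(2), of eta]
    by (subst T) (simp add: cl_mult_add_left parity_part_add parity_part_same parity_part_other)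
  moreover have "parity_part (\<not> b) (cl_mult eta n w T) = cl_mult eta n w (parity_part b T)"
    using cl_mult_parity[OF assms(3) parts(1), of eta] cl_mult_parity[OF assms(3) parts(2), of eta]
    by (subst T) (simp add: cl_mult_add_right parity_part_add parity_part_same parity_part_other)
  ultimately show ?thesis
    using assms(4) by simp
qed

lemma clifford_group_even_part_central:
  fixes eta :: "nat \<Rightarrow> 'a::field_char_0"
  assumes eta: "\<And>i. eta i \<noteq> 0" and T: "T \<in> clifford_group eta n"
  shows "cl_mult eta n (cl_inv eta n T) (parity_part True T) \<in> cl_center n"
proof -
  let ?T' = "cl_inv eta n T" and ?T0 = "parity_part True T"
  have inv: "cl_invertible eta n T"
    and conj: "\<And>v. v \<in> cl_grade n 1 \<Longrightarrow> cl_mult eta n (cl_mult eta n T v) ?T' \<in> cl_grade n 1"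
    using T unfolding clifford_group_def cl_units_iff by auto
  have "cl_mult eta n v (cl_mult eta n ?T' ?T0) = cl_mult eta n (cl_mult eta n ?T' ?T0) v"
    if v: "v \<in> cl_grade n 1" for v
  proof -
    let ?w = "cl_mult eta n (cl_mult eta n T v) ?T'"
    have "v \<in> cl_space n"
      using v by (simp add: cl_grade_def)
    then have "cl_mult eta n T v = cl_mult eta n ?w T"
      using inv by (simp add: cl_mult_inv_cancel_right')
    then have "cl_mult eta n ?T0 v = cl_mult eta n ?w ?T0"
      using inv v conj[OF v] by (intro parity_part_intertwines) (simp_all add: cl_invertible_space cl_grade_one_odd)
    then have "cl_mult eta n ?T' (cl_mult eta n ?T0 v)
        = cl_mult eta n (cl_mult eta n ?T' (cl_mult eta n T (cl_mult eta n v ?T'))) ?T0"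
      by (simp only: cl_mult_assoc)
    also have "\<dots> = cl_mult eta n v (cl_mult eta n ?T' ?T0)"
      using inv by (simp add: cl_mult_inv_cancel_left cl_mult_assoc)
    finally show ?thesis
      by (simp add: cl_mult_assoc)
  qed
  then show ?thesis
    using cl_center_iff[where eta = eta, OF eta cl_mult_in_space] by blast
qed

lemma homogeneous_if_even_part_scaled:
  assumes "x \<in> cl_space n" "parity_part True x = cl_scale a x"
  shows "x \<in> cl_even n \<union> cl_odd n"
proof -
  have even: "parity_part True x = cl_scale a (parity_part True x)"
    and odd: "0 = cl_scale a (parity_part False x)"
    using arg_cong[OF assms(2), of "parity_part True"] arg_cong[OF assms(2), of "parity_part False"]
    by (simp_all add: parity_part_scale)
  show ?thesis
  proof (cases "a = 0")
    case True
    then have "x = parity_part False x"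
      using even parity_part_decompose[of x] by simp
    then show ?thesis
      using parity_part_in_parity[OF assms(1), of False] by (simp add: cl_odd_eq_parity)
  next
    case False
    then have "x = parity_part True x"
      using odd parity_part_decompose[of x] by (simp add: cl_scale_eq_zero_iff)
    then show ?thesis
      using parity_part_in_parity[OF assms(1), of True] by (simp add: cl_even_eq_parity)
  qed
qed

lemma cl_PI:
  assumes "W \<in> cl_center n" "cl_invertible eta n W" "T \<in> cl_even n \<union> cl_odd n" "cl_invertible eta n T"
  shows "cl_mult eta n W T \<in> cl_P eta n"
  using assms unfolding cl_P_def cl_units_def by blast

lemma cl_P_if_homogeneous:
  assumes "cl_invertible eta n T" "T \<in> cl_even n \<union> cl_odd n"
  shows "T \<in> cl_P eta n"
  using cl_PI[OF cl_one_center cl_invertible_one assms(2,1)] assms(1)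
  by (simp add: cl_mult_one_left cl_invertible_space)

lemma even_part_factor_odd_dim:
  fixes eta :: "nat \<Rightarrow> 'a::field" and n :: nat
  defines "I \<equiv> pseudoscalar n" and "s \<equiv> blade_coeff eta {..<n} {..<n}"
  assumes n: "odd n" and eta: "\<And>i. eta i \<noteq> 0" and T: "T \<in> cl_space n" and "b \<noteq> 0"
    and even_part: "parity_part True T = cl_scale a T + cl_scale b (cl_mult eta n T I)"
  shows "T = cl_mult eta n (parity_part True T) (cl_one + cl_scale ((1 - a) / (b * s)) I)"
proof -
  define T0 T1 where "T0 = parity_part True T" and "T1 = parity_part False T"
  have parts: "T0 \<in> cl_parity n True" "T1 \<in> cl_parity n False"
    unfolding T0_def T1_def using T by (simp_all add: parity_part_in_parity)
  have I: "I \<in> cl_parity n False" "cl_mult eta n I I = cl_scale s cl_one"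
    unfolding I_def s_def using n pseudoscalar_parity[of n] by (simp_all add: pseudoscalar_squared)
  have "s \<noteq> 0"
    unfolding s_def by (rule blade_coeff_nonzero[OF eta]) auto
  have T_eq: "T = T0 + T1"
    unfolding T0_def T1_def by (simp add: parity_part_decompose)
  have "cl_mult eta n T0 I \<in> cl_parity n False" "cl_mult eta n T1 I \<in> cl_parity n True"
    using cl_mult_parity[OF parts(1) I(1), of eta] cl_mult_parity[OF parts(2) I(1), of eta] by simp_all
  then have "parity_part True (cl_mult eta n T I) = cl_mult eta n T1 I"
    by (simp add: T_eq cl_mult_add_left parity_part_add parity_part_same parity_part_other)
  then have "T0 = cl_scale a T0 + cl_scale b (cl_mult eta n T1 I)"
    using arg_cong[OF even_part, of "parity_part True"] by (simp add: parity_part_add parity_part_scale T0_def)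
  then have "cl_mult eta n T1 I = cl_scale ((1 - a) / b) T0"
    using \<open>b \<noteq> 0\<close> by (simp add: fun_eq_iff field_simps)
  then have "cl_scale s T1 = cl_scale ((1 - a) / b) (cl_mult eta n T0 I)"
    using I(2) parts(2) by (metis cl_mult_assoc cl_mult_one_right cl_mult_scale_left cl_mult_scale_right cl_parity_space)
  then have "cl_scale (inverse s) (cl_scale s T1) = cl_scale ((1 - a) / (b * s)) (cl_mult eta n T0 I)"
    using \<open>s \<noteq> 0\<close> \<open>b \<noteq> 0\<close> by (simp add: field_simps)
  then have "T1 = cl_mult eta n T0 (cl_scale ((1 - a) / (b * s)) I)"
    using \<open>s \<noteq> 0\<close> by (simp add: cl_mult_scale_right)
  then have "T = cl_mult eta n T0 (cl_one + cl_scale ((1 - a) / (b * s)) I)"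
    using parts(1) T_eq by (simp add: cl_mult_add_right cl_mult_one_right cl_parity_space)
  then show ?thesis
    by (simp only: T0_def)
qed

lemma pseudoscalar_factor_invertible:
  fixes eta :: "nat \<Rightarrow> 'a::field" and n :: nat and c :: 'a
  defines "W \<equiv> cl_one + cl_scale c (pseudoscalar n)"
  assumes n: "odd n" and T: "cl_invertible eta n T" "T = cl_mult eta n X W" and X: "X \<in> cl_space n"
  shows "cl_invertible eta n W" "cl_invertible eta n X"
proof -
  define W' where "W' = cl_one + cl_scale (- c) (pseudoscalar n)"
  define d where "d = 1 - c * c * blade_coeff eta {..<n} {..<n}"
  have "0 < n"
    using n by (rule odd_pos)
  then have nonempty: "{..<n} \<noteq> {}"
    by auto
  have prod: "cl_mult eta n W W' = cl_scale d cl_one" "cl_mult eta n W' W = cl_scale d cl_one"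
    unfolding W_def W'_def d_def
    using scalar_plus_pseudoscalar_mult[OF \<open>0 < n\<close>, of eta 1 c 1 "- c"]
      scalar_plus_pseudoscalar_mult[OF \<open>0 < n\<close>, of eta 1 "- c" 1 c] nonempty
    by simp_all
  have "d \<noteq> 0"
  proof
    assume "d = 0"
    then have "cl_mult eta n T W' = 0"
      using T(2) prod(1) by (simp add: cl_mult_assoc)
    then have "W' = 0"
      by (rule cl_mult_eq_zero_cancel_left[OF T(1), rotated]) (simp add: W'_def cl_space_blade)
    moreover have "W' {} = 1"
      using nonempty by (simp add: W'_def cl_one_def cl_blade_def)
    ultimately show False
      by simp
  qed
  then show W: "cl_invertible eta n W"
    using prod by (intro cl_invertible_if_scalar_product[where y = W']) (simp_all add: W_def W'_def cl_space_blade)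
  have "X = cl_mult eta n T (cl_inv eta n W)"
    using T(2) W X by (simp add: cl_mult_inv_cancel_right)
  then show "cl_invertible eta n X"
    using cl_invertible_mult[OF T(1) cl_invertible_inv[OF W]] by simp
qed

lemma cl_P_if_even_part_odd_dim:
  fixes eta :: "nat \<Rightarrow> 'a::field"
  assumes n: "odd n" and eta: "\<And>i. eta i \<noteq> 0" and T: "cl_invertible eta n T" and "b \<noteq> 0"
    and even_part: "parity_part True T = cl_scale a T + cl_scale b (cl_mult eta n T (pseudoscalar n))"
  shows "T \<in> cl_P eta n"
proof -
  let ?W = "cl_one + cl_scale ((1 - a) / (b * blade_coeff eta {..<n} {..<n})) (pseudoscalar n)"
  have Tsp: "T \<in> cl_space n"
    using T by (rule cl_invertible_space)
  have factor: "T = cl_mult eta n (parity_part True T) ?W"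
    using even_part_factor_odd_dim[where eta = eta, OF n eta Tsp \<open>b \<noteq> 0\<close> even_part] .
  have "cl_invertible eta n ?W" "cl_invertible eta n (parity_part True T)"
    using pseudoscalar_factor_invertible[OF n T factor] Tsp by (simp_all add: parity_part_space)
  moreover have "?W \<in> cl_center n" "parity_part True T \<in> cl_even n"
    using scalar_plus_pseudoscalar_center[OF n, of 1] Tsp by (simp_all add: cl_even_eq_parity parity_part_in_parity)
  moreover have "T = cl_mult eta n ?W (parity_part True T)"
    using factor cl_center_commute[OF \<open>?W \<in> cl_center n\<close>] by metis
  ultimately show ?thesis
    using cl_PI by (metis UnI1)
qed

lemma clifford_group_subset_P:
  fixes eta :: "nat \<Rightarrow> 'a::field_char_0"
  assumes eta: "\<And>i. eta i \<noteq> 0" and T: "T \<in> clifford_group eta n"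
  shows "T \<in> cl_P eta n"
proof -
  define z where "z = cl_mult eta n (cl_inv eta n T) (parity_part True T)"
  have inv: "cl_invertible eta n T"
    using T by (simp add: clifford_group_def cl_units_iff)
  then have Tsp: "T \<in> cl_space n"
    by (rule cl_invertible_space)
  have z: "z \<in> cl_center n"
    unfolding z_def by (rule clifford_group_even_part_central[OF eta T])
  have even_part: "parity_part True T = cl_mult eta n T z"
    unfolding z_def using inv Tsp by (simp add: cl_mult_inv_cancel_left' parity_part_space)
  from cl_center_cases[OF z] show ?thesis
  proof
    assume "z = cl_scale (z {}) cl_one"
    then have "parity_part True T = cl_scale (z {}) T"
      using even_part Tsp by (metis cl_mult_one_right cl_mult_scale_right)
    then show ?thesis
      using homogeneous_if_even_part_scaled[OF Tsp] cl_P_if_homogeneous[OF inv] by blast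
  next
    assume odd: "odd n \<and> z {..<n} \<noteq> 0 \<and> z = cl_scale (z {}) cl_one + cl_scale (z {..<n}) (pseudoscalar n)"
    then have "parity_part True T = cl_scale (z {}) T + cl_scale (z {..<n}) (cl_mult eta n T (pseudoscalar n))"
      using even_part Tsp by (metis cl_mult_add_right cl_mult_one_right cl_mult_scale_right)
    then show ?thesis
      using cl_P_if_even_part_odd_dim[where eta = eta, OF _ eta inv] odd by blast
  qed
qed

lemma rev_mult_self_central:
  fixes eta :: "nat \<Rightarrow> 'a::field_char_0"
  assumes eta: "\<And>i. eta i \<noteq> 0" and T: "T \<in> clifford_group eta n"
  shows "cl_mult eta n (cl_rev T) T \<in> cl_center n"
proof -
  let ?T' = "cl_inv eta n T" and ?R = "cl_mult eta n (cl_rev T) T"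
  have inv: "cl_invertible eta n T"
    and conj: "\<And>v. v \<in> cl_grade n 1 \<Longrightarrow> cl_mult eta n (cl_mult eta n T v) ?T' \<in> cl_grade n 1"
    using T unfolding clifford_group_def cl_units_iff by auto
  have "cl_mult eta n v ?R = cl_mult eta n ?R v" if v: "v \<in> cl_grade n 1" for v
  proof -
    let ?w = "cl_mult eta n (cl_mult eta n T v) ?T'"
    have "cl_rev ?w = ?w"
      by (rule cl_rev_vector[OF conj[OF v]])
    then have "cl_mult eta n (cl_rev ?T') (cl_mult eta n v (cl_rev T)) = ?w"
      by (simp add: cl_rev_mult cl_rev_vector[OF v] cl_mult_assoc)
    moreover have "cl_mult eta n (cl_rev T) (cl_rev ?T') = cl_one"
      using inv by (simp add: cl_rev_mult[symmetric] cl_invertibleD)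
    ultimately have rev_T: "cl_mult eta n v (cl_rev T) = cl_mult eta n (cl_rev T) ?w"
      by (metis cl_mult_assoc cl_mult_in_space cl_mult_one_left)
    have "cl_mult eta n v ?R = cl_mult eta n (cl_mult eta n (cl_rev T) ?w) T"
      by (simp only: cl_mult_assoc[symmetric] rev_T)
    also have "\<dots> = cl_mult eta n ?R v"
      using inv v by (simp add: cl_mult_assoc cl_invertibleD cl_mult_one_right cl_grade_def)
    finally show ?thesis .
  qed
  then show ?thesis
    using cl_center_iff[where eta = eta, OF eta cl_mult_in_space] by blast
qed

theorem clifford_group_subset_Q:
  fixes eta :: "nat \<Rightarrow> 'a::field_char_0"
  assumes eta: "\<And>i. eta i \<noteq> 0" and T: "T \<in> clifford_group eta n"
  shows "T \<in> cl_Q eta n"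
proof -
  have "cl_invertible eta n T"
    using T by (simp add: clifford_group_def cl_units_iff)
  then have "cl_invertible eta n (cl_mult eta n (cl_rev T) T)"
    by (intro cl_invertible_mult cl_invertible_rev)
  then show ?thesis
    unfolding cl_Q_def using clifford_group_subset_P[OF eta T] rev_mult_self_central[OF eta T]
    by (simp add: cl_units_iff)
qed

section \<open>Q lies in the Clifford group when n \<le> 5\<close>

lemma vector_square_scalar:
  fixes eta :: "nat \<Rightarrow> 'a::field_char_0"
  assumes v: "v \<in> cl_grade n 1"
  shows "cl_mult eta n v v = cl_scale (cl_mult eta n v v {}) cl_one"
proof (rule cl_space_eqI[where n = n])
  fix C assume C: "C \<subseteq> {..<n}"
  show "cl_mult eta n v v C = cl_scale (cl_mult eta n v v {}) cl_one C"
  proof (cases "C = {}")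
    case nonempty: False
    have "v (A \<triangle> C) * v A * blade_coeff eta (A \<triangle> C) A = - (v A * v (A \<triangle> C) * blade_coeff eta A (A \<triangle> C))"
      for A
    proof (cases "v A = 0 \<or> v (A \<triangle> C) = 0")
      case False
      then have "card A = 1" "card (A \<triangle> C) = 1"
        using v unfolding cl_grade_def by auto
      then obtain i j where ij: "A = {i}" "A \<triangle> C = {j}"
        by (meson card_1_singletonE)
      have "i \<noteq> j"
      proof
        assume "i = j"
        then have "A \<triangle> (A \<triangle> C) = {}"
          using ij by simp
        with nonempty show False
          by simp
      qed
      with ij show ?thesis
        by (simp add: blade_coeff_eq blade_sign_def)
    qed auto
    then have "cl_mult eta n v v C = - cl_mult eta n v v C"
      using cl_mult_apply[OF C, of eta v v] cl_mult_apply_swapped[OF C, of eta v v] by (simp add: sum_negf)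
    then show ?thesis
      using nonempty by (simp add: cl_one_def)
  qed (simp add: cl_one_def)
qed simp_all

lemma odd_rev_fixed_support:
  fixes n :: nat and Y :: "'a::field_char_0 mvec"
  assumes "n \<le> 5" "Y \<in> cl_parity n False" "cl_rev Y = Y" "Y A \<noteq> 0"
  shows "card A = 1 \<or> (n = 5 \<and> A = {..<n})"
proof -
  have A: "A \<subseteq> {..<n}" and odd: "odd (card A)"
    using assms(2,4) unfolding cl_parity_def cl_space_def by auto
  have "card A \<le> n"
    using card_mono[OF _ A] by simp
  moreover have "rev_sign A = (1::'a)"
    using fun_cong[OF assms(3), of A] assms(4) by (simp add: cl_rev_apply)
  then have "card A \<noteq> 3"
    by (auto simp: rev_sign_def)
  ultimately have "card A = 1 \<or> card A = n \<and> n = 5"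
    using odd assms(1) by presburger
  moreover have "A = {..<n}" if "card A = n"
    using card_subset_eq[OF finite_lessThan A] that by simp
  ultimately show ?thesis
    by blast
qed

lemma vector_mult_pseudoscalar_support:
  fixes u :: "'a::field mvec"
  assumes "u \<in> cl_grade n 1" "cl_mult eta n u (pseudoscalar n) C \<noteq> 0"
  shows "card C = n - 1"
proof -
  obtain A where "C \<subseteq> {..<n}" and A: "A \<subseteq> {..<n}" "u A \<noteq> 0" "(pseudoscalar n :: 'a mvec) (A \<triangle> C) \<noteq> 0"
    by (rule cl_mult_nonzero_support[OF assms(2)])
  then have "A \<triangle> C = {..<n}"
    by (simp add: cl_blade_def split: if_splits)
  then have "C = A \<triangle> {..<n}"
    by (metis symdiff_cancel(1))
  also have "\<dots> = {..<n} - A"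
    using A(1) by (auto simp: symdiff_def)
  finally show ?thesis
    using assms(1) A by (simp add: card_Diff_subset finite_subset_lessThan cl_grade_def)
qed

lemma vector_plus_pseudoscalar_square_scalar:
  fixes eta :: "nat \<Rightarrow> 'a::field_char_0" and n :: nat and u :: "'a mvec" and k :: 'a
  defines "Y \<equiv> u + cl_scale k (pseudoscalar n)"
  assumes n: "odd n" "1 < n" and eta: "\<And>i. eta i \<noteq> 0" and u: "u \<in> cl_grade n 1" and "k \<noteq> 0"
    and square: "cl_mult eta n Y Y = cl_scale c cl_one"
  shows "u = 0"
proof -
  let ?I = "pseudoscalar n :: 'a mvec"
  have I: "?I \<in> cl_center n" "cl_mult eta n ?I ?I = cl_scale (blade_coeff eta {..<n} {..<n}) cl_one"
    using n(1) by (simp_all add: pseudoscalar_center pseudoscalar_squared)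
  txt \<open>The cross term \<open>2k uI\<close> is the only part of \<open>Y\<^sup>2\<close> of grade \<open>n - 1\<close>, and \<open>u\<^sup>2\<close>, \<open>I\<^sup>2\<close> are scalars.\<close>
  have "cl_mult eta n u ?I C = 0" for C
  proof (cases "card C = n - 1")
    case True
    then have "C \<noteq> {}"
      using n(2) by auto
    have "cl_mult eta n Y Y = cl_mult eta n u u + cl_scale (2 * k) (cl_mult eta n u ?I)
        + cl_scale (k * k) (cl_mult eta n ?I ?I)"
      unfolding Y_def using cl_center_commute[OF I(1), of eta u]
      by (simp add: cl_mult_add_left cl_mult_add_right cl_mult_scale_left cl_mult_scale_right
          fun_eq_iff algebra_simps)
    then have "0 = 2 * k * cl_mult eta n u ?I C"
      using fun_cong[OF square, of C] fun_cong[OF vector_square_scalar[OF u, of eta], of C] I(2) \<open>C \<noteq> {}\<close>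
      by (simp add: cl_one_def)
    then show ?thesis
      using \<open>k \<noteq> 0\<close> by simp
  qed (use vector_mult_pseudoscalar_support[OF u, of eta C] in auto)
  then have "cl_mult eta n u ?I = 0"
    by (simp add: fun_eq_iff)
  moreover have "u \<in> cl_space n"
    using u by (simp add: cl_grade_def)
  ultimately show ?thesis
    using cl_mult_eq_zero_cancel_right[OF pseudoscalar_invertible[of eta n, OF eta]] by blast
qed

definition vector_part :: "'a::field mvec \<Rightarrow> 'a mvec" where
  "vector_part x = (\<lambda>A. if card A = 1 then x A else 0)"

lemma vector_part_vector: "x \<in> cl_space n \<Longrightarrow> vector_part x \<in> cl_grade n 1"
  by (auto simp: vector_part_def cl_grade_def cl_space_def)

lemma vector_or_pseudoscalar_if_square_scalar:
  fixes eta :: "nat \<Rightarrow> 'a::field_char_0" and n :: nat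
  assumes n: "odd n" "1 < n" and eta: "\<And>i. eta i \<noteq> 0" and Y: "Y \<in> cl_space n"
    and support: "\<And>A. Y A \<noteq> 0 \<Longrightarrow> card A = 1 \<or> A = {..<n}"
    and square: "cl_mult eta n Y Y = cl_scale c cl_one"
  shows "Y \<in> cl_grade n 1 \<or> Y = cl_scale (Y {..<n}) (pseudoscalar n)"
proof -
  have Y_eq: "Y = vector_part Y + cl_scale (Y {..<n}) (pseudoscalar n)"
  proof
    fix A
    show "Y A = (vector_part Y + cl_scale (Y {..<n}) (pseudoscalar n)) A"
      using support[of A] n(2) by (cases "Y A = 0") (auto simp: vector_part_def cl_blade_def)
  qed
  show ?thesis
  proof (cases "Y {..<n} = 0")
    case False
    then have "vector_part Y = 0"
      using vector_plus_pseudoscalar_square_scalar[OF n eta vector_part_vector[OF Y] False] square Y_eq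
      by simp
    with Y_eq show ?thesis
      by simp
  qed (use Y_eq vector_part_vector[OF Y] in simp)
qed

lemma homogeneous_factor_norm_scalar:
  fixes eta :: "nat \<Rightarrow> 'a::field_char_0"
  assumes eta: "\<And>i. eta i \<noteq> 0"
    and W: "W \<in> cl_center n" "cl_invertible eta n W"
    and T': "T' \<in> cl_parity n b" "cl_invertible eta n T'"
    and R: "cl_mult eta n (cl_rev (cl_mult eta n W T')) (cl_mult eta n W T') \<in> cl_center n"
  obtains l where "l \<noteq> 0" "cl_mult eta n (cl_rev T') T' = cl_scale l cl_one"
proof -
  define M where "M = cl_mult eta n (cl_rev W) W"
  define R0 where "R0 = cl_mult eta n (cl_rev T') T'"
  have M: "M \<in> cl_center n" "cl_invertible eta n M"
    unfolding M_def using W by (simp_all add: cl_center_mult[OF eta] cl_center_rev cl_invertible_mult cl_invertible_rev)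
  have "cl_mult eta n (cl_rev (cl_mult eta n W T')) (cl_mult eta n W T') = cl_mult eta n M R0"
    unfolding M_def R0_def cl_rev_mult
    by (metis cl_mult_assoc cl_center_commute[OF M(1)[unfolded M_def]])
  then have "R0 = cl_mult eta n (cl_inv eta n M) (cl_mult eta n (cl_rev (cl_mult eta n W T')) (cl_mult eta n W T'))"
    using M(2) by (simp add: R0_def cl_mult_inv_cancel_left)
  then have "R0 \<in> cl_center n"
    using cl_center_mult[OF eta cl_center_inv[OF eta M] R] by simp
  moreover have "R0 \<in> cl_parity n True"
    unfolding R0_def using cl_mult_parity[OF cl_rev_parity[OF T'(1)] T'(1), of eta] by simp
  ultimately have "R0 = cl_scale (R0 {}) cl_one"
    by (rule cl_center_even_part_scalar)
  moreover have "R0 {} \<noteq> 0"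
  proof
    assume "R0 {} = 0"
    with \<open>R0 = cl_scale (R0 {}) cl_one\<close> have "R0 = 0"
      by simp
    moreover have "cl_invertible eta n R0"
      unfolding R0_def using T'(2) by (simp add: cl_invertible_mult cl_invertible_rev)
    ultimately show False
      using not_cl_invertible_zero by blast
  qed
  ultimately show thesis
    using that R0_def by blast
qed

lemma cl_inv_eq_scaled_rev:
  assumes "cl_invertible eta n T" "cl_mult eta n (cl_rev T) T = cl_scale l cl_one" "l \<noteq> 0"
  shows "cl_inv eta n T = cl_scale (inverse l) (cl_rev T)"
  using assms by (intro cl_inv_eq_left) (simp_all add: cl_rev_space cl_invertible_space cl_mult_scale_left)

lemma vector_conjugate_square:
  fixes eta :: "nat \<Rightarrow> 'a::field_char_0" and n :: nat and T v :: "'a mvec"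
  defines "Y \<equiv> cl_mult eta n (cl_mult eta n T v) (cl_inv eta n T)"
  assumes T: "cl_invertible eta n T" and v: "v \<in> cl_grade n 1"
  shows "cl_mult eta n Y Y = cl_scale (cl_mult eta n v v {}) cl_one"
proof -
  have "cl_mult eta n Y Y = cl_mult eta n T (cl_mult eta n (cl_mult eta n v v) (cl_inv eta n T))"
    unfolding Y_def using T v by (simp add: cl_mult_assoc cl_mult_inv_cancel_left cl_grade_def)
  also have "\<dots> = cl_scale (cl_mult eta n v v {}) (cl_mult eta n T (cl_inv eta n T))"
    using T by (subst vector_square_scalar[OF v]) (simp add: cl_mult_scale_left cl_mult_scale_right cl_mult_one_left cl_invertibleD)
  finally show ?thesis
    using T by (simp add: cl_invertibleD)
qed

lemma vector_conjugate_pseudoscalar: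
  assumes "odd n" "1 < n" and T: "cl_invertible eta n T" and v: "v \<in> cl_grade n 1"
    and "cl_mult eta n (cl_mult eta n T v) (cl_inv eta n T) = cl_scale c (pseudoscalar n)"
  shows "c = 0"
proof -
  have "v = cl_mult eta n (cl_inv eta n T) (cl_mult eta n (cl_mult eta n (cl_mult eta n T v) (cl_inv eta n T)) T)"
    using T v by (simp add: cl_mult_assoc cl_mult_inv_cancel_left cl_invertibleD cl_mult_one_right cl_grade_def)
  also have "\<dots> = cl_scale c (cl_mult eta n (cl_inv eta n T) (cl_mult eta n T (pseudoscalar n)))"
    using assms(5) cl_center_commute[OF pseudoscalar_center[OF assms(1)], of eta T]
    by (simp add: cl_mult_scale_left cl_mult_scale_right)
  also have "\<dots> = cl_scale c (pseudoscalar n)"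
    using T by (simp add: cl_mult_inv_cancel_left cl_space_blade)
  finally have "v {..<n} = c"
    by (simp add: cl_blade_def)
  moreover have "v {..<n} = 0"
    using v assms(2) unfolding cl_grade_def by auto
  ultimately show ?thesis
    by simp
qed

lemma vector_conjugate_le5:
  fixes eta :: "nat \<Rightarrow> 'a::field_char_0" and n :: nat and T v :: "'a mvec"
  defines "Y \<equiv> cl_mult eta n (cl_mult eta n T v) (cl_inv eta n T)"
  assumes eta: "\<And>i. eta i \<noteq> 0" and "n \<le> 5"
    and T: "T \<in> cl_parity n b" "cl_invertible eta n T"
    and norm: "cl_mult eta n (cl_rev T) T = cl_scale l cl_one" "l \<noteq> 0"
    and v: "v \<in> cl_grade n 1"
  shows "Y \<in> cl_grade n 1"
proof -
  have inv: "cl_inv eta n T = cl_scale (inverse l) (cl_rev T)"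
    using T(2) norm by (rule cl_inv_eq_scaled_rev)
  have "cl_inv eta n T \<in> cl_parity n b"
    unfolding inv by (simp add: cl_parity_scale cl_rev_parity T(1))
  then have "Y \<in> cl_parity n False"
    unfolding Y_def using cl_mult_parity[OF cl_mult_parity[OF T(1) cl_grade_one_odd[OF v]], of _ b eta eta]
    by (cases b) simp_all
  moreover have "cl_rev Y = Y"
    unfolding Y_def inv
    by (simp add: cl_rev_mult cl_rev_scale cl_rev_vector[OF v] cl_mult_scale_left cl_mult_scale_right cl_mult_assoc)
  ultimately have support: "card A = 1 \<or> (n = 5 \<and> A = {..<n})" if "Y A \<noteq> 0" for A
    using odd_rev_fixed_support[OF \<open>n \<le> 5\<close>] that by blast
  show ?thesis
  proof (cases "n = 5")
    case True
    then have "Y \<in> cl_grade n 1 \<or> Y = cl_scale (Y {..<n}) (pseudoscalar n)"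
      using support vector_conjugate_square[OF T(2) v]
      by (intro vector_or_pseudoscalar_if_square_scalar[OF _ _ eta]) (auto simp: Y_def)
    moreover have "Y {..<n} = 0" if "Y = cl_scale (Y {..<n}) (pseudoscalar n)"
      using vector_conjugate_pseudoscalar[OF _ _ T(2) v] that True unfolding Y_def by simp
    ultimately show ?thesis
      by (auto simp: cl_grade_def)
  qed (use support in \<open>auto simp: cl_grade_def Y_def\<close>)
qed

theorem Q_subset_clifford_group:
  fixes eta :: "nat \<Rightarrow> 'a::field_char_0"
  assumes eta: "\<And>i. eta i \<noteq> 0" and "n \<le> 5" and T: "T \<in> cl_Q eta n"
  shows "T \<in> clifford_group eta n"
proof -
  obtain W T' where W: "W \<in> cl_center n" "cl_invertible eta n W"
    and T': "T' \<in> cl_even n \<union> cl_odd n" "cl_invertible eta n T'"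
    and T_eq: "T = cl_mult eta n W T'" and R: "cl_mult eta n (cl_rev T) T \<in> cl_center n"
    using T unfolding cl_Q_def cl_P_def cl_units_def by blast
  obtain b where b: "T' \<in> cl_parity n b"
    using T'(1) by (auto simp: cl_even_eq_parity cl_odd_eq_parity)
  obtain l where l: "l \<noteq> 0" "cl_mult eta n (cl_rev T') T' = cl_scale l cl_one"
    using homogeneous_factor_norm_scalar[OF eta W b T'(2)] R T_eq by blast
  have inv: "cl_invertible eta n T"
    unfolding T_eq using W(2) T'(2) by (rule cl_invertible_mult)
  have "cl_mult eta n (cl_mult eta n T v) (cl_inv eta n T) \<in> cl_grade n 1" if v: "v \<in> cl_grade n 1" for v
  proof -
    let ?Y = "cl_mult eta n (cl_mult eta n T' v) (cl_inv eta n T')"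
    have Y: "?Y \<in> cl_grade n 1"
      using vector_conjugate_le5[OF eta \<open>n \<le> 5\<close> b T'(2) l(2,1) v] .
    have "cl_mult eta n (cl_mult eta n T v) (cl_inv eta n T) = cl_mult eta n (cl_mult eta n W ?Y) (cl_inv eta n W)"
      unfolding T_eq cl_inv_mult[OF W(2) T'(2)] by (simp add: cl_mult_assoc)
    also have "\<dots> = ?Y"
      using W Y by (simp add: cl_center_commute[OF W(1)] cl_mult_inv_cancel_right cl_grade_def)
    finally show ?thesis
      using Y by simp
  qed
  with inv show ?thesis
    by (simp add: clifford_group_def cl_units_iff cl_invertible_space)
qed

theorem clifford_group_eq_Q:
  fixes eta :: "nat \<Rightarrow> 'a::field_char_0"
  assumes "\<And>i. eta i \<noteq> 0" "n \<le> 5"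
  shows "clifford_group eta n = cl_Q eta n"
  using clifford_group_subset_Q[where eta = eta] Q_subset_clifford_group[where eta = eta] assms by blast

section \<open>A counterexample in dimension 6\<close>

lemma pseudoscalar_coeff_squared:
  assumes "\<And>i. eta i * eta i = 1"
  shows "blade_coeff eta {..<n} {..<n} * blade_coeff eta {..<n} {..<n} = 1"
proof -
  have "prod eta {..<n} * prod eta {..<n} = 1"
    by (simp add: prod.distrib[symmetric] assms)
  moreover have "blade_coeff eta {..<n} {..<n} * blade_coeff eta {..<n} {..<n}
      = (blade_sign {..<n} {..<n} * blade_sign {..<n} {..<n}) * (prod eta {..<n} * prod eta {..<n})"
    by (simp add: blade_coeff_eq ac_simps)
  ultimately show ?thesis
    by (simp add: blade_sign_squared)
qed

lemma pseudoscalar_anticommutes_with_vector: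
  assumes "even n" "i < n"
  shows "blade_coeff eta {..<n} {i} = - blade_coeff eta {i} {..<n}"
proof -
  have "blade_sign {i} {..<n} * blade_sign {..<n} {i} = (-1::'a)"
    using blade_sign_pseudoscalar_swap[of "{i}" n] assms by (simp add: mult.commute)
  then have "blade_sign {..<n} {i} = - (blade_sign {i} {..<n} :: 'a)"
    using blade_sign_converse[of "{..<n}" "{i}", where 'a = 'a] by simp
  then show ?thesis
    by (simp add: blade_coeff_eq Int_commute)
qed

lemma vector_conjugate_by_two_plus_pseudoscalar:
  fixes eta :: "nat \<Rightarrow> 'a::field"
  assumes "even n" "0 < n"
  shows "cl_mult eta n (cl_mult eta n (cl_scale 2 cl_one + pseudoscalar n) (cl_blade {0}))
      (cl_scale 2 cl_one + cl_scale (- 1) (pseudoscalar n)) ({..<n} - {0}) = - 4 * blade_coeff eta {0} {..<n}"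
proof -
  let ?U = "{..<n}" and ?C = "{..<n} - {0}"
  let ?X = "cl_mult eta n (cl_scale 2 cl_one + pseudoscalar n) (cl_blade {0})"
  have sub: "{0} \<subseteq> ?U" "?C \<subseteq> ?U"
    using assms by auto
  have "{0} \<triangle> ?C = ?U" "?U \<triangle> ?C = {0}"
    using assms by (auto simp: symdiff_def)
  moreover have "(cl_scale 2 cl_one + pseudoscalar n :: 'a mvec) ?U = 1"
    "(cl_scale 2 cl_one + pseudoscalar n :: 'a mvec) {} = 2"
    using assms by (auto simp: cl_one_def cl_blade_def)
  ultimately have "?X ?C = blade_coeff eta ?U {0}" "?X {0} = 2"
    using cl_mult_blade_right[OF sub(1) sub(2), of eta] cl_mult_blade_right[OF sub(1) sub(1), of eta] by simp_all
  moreover have "cl_mult eta n ?X (pseudoscalar n) ?C = ?X {0} * blade_coeff eta {0} ?U"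
    using sub \<open>?U \<triangle> ?C = {0}\<close> by (simp add: cl_mult_blade_right)
  ultimately show ?thesis
    using pseudoscalar_anticommutes_with_vector[OF assms(1,2), of eta]
    by (simp add: cl_mult_add_right cl_mult_scale_right cl_mult_one_right)
qed

lemma two_plus_pseudoscalar_norm:
  fixes eta :: "nat \<Rightarrow> 'a::field" and n :: nat
  defines "T \<equiv> cl_scale 2 cl_one + pseudoscalar n"
    and "T' \<equiv> cl_scale 2 cl_one + cl_scale (- 1) (pseudoscalar n)"
    and "d \<equiv> 4 - blade_coeff eta {..<n} {..<n}"
  assumes n: "0 < n" and rev: "rev_sign {..<n} = (-1::'a)"
  shows "cl_rev T = T'" "cl_mult eta n T' T = cl_scale d cl_one" "cl_mult eta n T T' = cl_scale d cl_one"
proof -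
  show "cl_rev T = T'"
    using n rev by (auto simp: fun_eq_iff T_def T'_def cl_rev_apply cl_one_def cl_blade_def rev_sign_def)
  show "cl_mult eta n T' T = cl_scale d cl_one" "cl_mult eta n T T' = cl_scale d cl_one"
    unfolding T_def T'_def d_def
    using scalar_plus_pseudoscalar_mult[where eta = eta and \<alpha> = 2 and p = "- 1" and \<beta> = 2 and q = 1, OF n]
      scalar_plus_pseudoscalar_mult[where eta = eta and \<alpha> = 2 and p = 1 and \<beta> = 2 and q = "- 1", OF n]
    by simp_all
qed

theorem clifford_group_ne_Q:
  fixes eta :: "nat \<Rightarrow> 'a::field_char_0"
  assumes eta: "\<And>i. eta i * eta i = 1" and n: "even n" "2 < n" and rev: "rev_sign {..<n} = (-1::'a)"
  shows "clifford_group eta n \<noteq> cl_Q eta n"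
proof
  assume eq: "clifford_group eta n = cl_Q eta n"
  define T :: "'a mvec" where "T = cl_scale 2 cl_one + pseudoscalar n"
  define T' :: "'a mvec" where "T' = cl_scale 2 cl_one + cl_scale (- 1) (pseudoscalar n)"
  define d where "d = 4 - blade_coeff eta {..<n} {..<n}"
  have norm: "cl_rev T = T'" "cl_mult eta n T' T = cl_scale d cl_one" "cl_mult eta n T T' = cl_scale d cl_one"
    using two_plus_pseudoscalar_norm[OF _ rev] n unfolding T_def T'_def d_def by simp_all
  have "d \<noteq> 0"
    using pseudoscalar_coeff_squared[of eta n, OF eta] by (auto simp: d_def)
  have space: "T \<in> cl_space n" "T' \<in> cl_space n"
    by (simp_all add: T_def T'_def cl_space_blade)
  have inv: "cl_invertible eta n T"
    by (rule cl_invertible_if_scalar_product[OF space \<open>d \<noteq> 0\<close> norm(3,2)])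
  have "T \<in> cl_even n"
    using n space(1) unfolding cl_even_def by (auto simp: T_def cl_one_def cl_blade_def)
  then have "T \<in> cl_Q eta n"
    using cl_P_if_homogeneous[OF inv] norm \<open>d \<noteq> 0\<close>
    by (simp add: cl_Q_def cl_units_iff cl_scalar_center cl_invertible_scalar)
  then have "cl_mult eta n (cl_mult eta n T (cl_blade {0})) (cl_inv eta n T) \<in> cl_grade n 1"
    using eq cl_blade_singleton_vector[of 0 n] n unfolding clifford_group_def by auto
  moreover have "cl_inv eta n T = cl_scale (inverse d) T'"
    using norm \<open>d \<noteq> 0\<close> space by (intro cl_inv_eq_right[OF inv]) (simp_all add: cl_mult_scale_right)
  moreover have "card ({..<n} - {0}) \<noteq> 1"
    using n by simp
  ultimately have "cl_mult eta n (cl_mult eta n T (cl_blade {0})) T' ({..<n} - {0}) = 0"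
    using \<open>d \<noteq> 0\<close> by (auto simp: cl_grade_def cl_mult_scale_right)
  moreover have "cl_mult eta n (cl_mult eta n T (cl_blade {0})) T' ({..<n} - {0})
      = - 4 * blade_coeff eta {0} {..<n}"
    unfolding T_def T'_def using n by (intro vector_conjugate_by_two_plus_pseudoscalar) simp_all
  moreover have "blade_coeff eta {0} {..<n} \<noteq> 0"
    using eta by (intro blade_coeff_nonzero) (auto, metis mult_zero_left zero_neq_one)
  ultimately show False
    by simp
qed

lemma rev_sign_six: "rev_sign {..<6} = (-1::'a::field)"
  by (simp add: rev_sign_def)

theorem mainTheorem14:
  shows "(\<forall>n p q. 2 \<le> n \<and> n \<le> 5 \<and> p + q = n \<longrightarrow>
            clifford_group (real_sig p) n = cl_Q (real_sig p) n)
       \<and> (\<forall>n. 2 \<le> n \<and> n \<le> 5 \<longrightarrow>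
            clifford_group complex_sig n = cl_Q complex_sig n)
       \<and> (\<forall>p q. p + q = 6 \<longrightarrow>
            clifford_group (real_sig p) 6 \<noteq> cl_Q (real_sig p) 6)
       \<and> clifford_group complex_sig 6 \<noteq> cl_Q complex_sig 6"
proof (intro conjI allI impI)
  fix n p q :: nat
  assume "2 \<le> n \<and> n \<le> 5 \<and> p + q = n"
  then show "clifford_group (real_sig p) n = cl_Q (real_sig p) n"
    by (intro clifford_group_eq_Q) (simp_all add: real_sig_def)
next
  fix n :: nat
  assume "2 \<le> n \<and> n \<le> 5"
  then show "clifford_group complex_sig n = cl_Q complex_sig n"
    by (intro clifford_group_eq_Q) (simp_all add: complex_sig_def)
next
  fix p q :: nat
  show "clifford_group (real_sig p) 6 \<noteq> cl_Q (real_sig p) 6"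
    by (rule clifford_group_ne_Q) (simp_all add: real_sig_def rev_sign_six)
next
  show "clifford_group complex_sig 6 \<noteq> cl_Q complex_sig 6"
    by (rule clifford_group_ne_Q) (simp_all add: complex_sig_def rev_sign_six)
qed

end
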